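(* In the LHARG setting with stochastic discount factor and risk-neutral measure $\mathbb{Q}$ as described in the context (with parameters $\nu_1,\nu_2\in\mathbb{R}$), fix integers $t<T$ and $z\in\mathbb{R}$. Let $Y^*=-\nu_2\lambda-\nu_1+\tfrac12\nu_2^2$ and define backward recursively for $s=T-1,\dots,t$, with terminal conditions $A^*_T=0$, $B^*_{T,i}=0$, $C^*_{T,j}=0$: $$X^*_{s+1}=(z-\nu_2)\lambda+B^*_{s+1,1}-\nu_1+\frac{\tfrac12(z-\nu_2)^2+\gamma^2C^*_{s+1,1}-2C^*_{s+1,1}\gamma(z-\nu_2)}{1-2C^*_{s+1,1}},$$ $$A^*_s=A^*_{s+1}+zr-\tfrac12\ln(1-2C^*_{s+1,1})-\delta w(X^*_{s+1},\theta)+\delta w(Y^*,\theta)+d\,v(X^*_{s+1},\theta)-d\,v(Y^*,\theta),$$ $$B^*_{s,i}=B^*_{s+1,i+1}\mathbf{1}_{\{i\le p-1\}}+\big(v(X^*_{s+1},\theta)-v(Y^*,\theta)\big)\beta_i\ \ (1\le i\le p),$$ $$C^*_{s,j}=C^*_{s+1,j+1}\mathbf{1}_{\{j\le q-1\}}+\big(v(X^*_{s+1},\theta)-v(Y^*,\theta)\big)\alpha_j\ \ (1\le j\le q).$$ Assume $\theta Y^*<1$, and $1-2C^*_{s+1,1}>0$, $\theta X^*_{s+1}<1$ for all $s$. Then $$\varphi^{\mathbb{Q}}_{\nu_1\nu_2}(t,T,z):=\mathbb{E}^{\mathbb{Q}}\left[e^{zy_{t,T}}\mid\mathcal{F}_t\right]=\exp\Big(A^*_t+\sum_{i=1}^pB^*_{t,i}\mathrm{RV}_{t+1-i}+\sum_{j=1}^qC^*_{t,j}\ell_{t+1-j}\Big),$$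 where $y_{t,T}=\sum_{s=t+1}^Ty_s$.
   Context: LHARG setting. Discrete time. $(\epsilon_t)$ are i.i.d. $\mathcal{N}(0,1)$ under $\mathbb{P}$ and $(\mathrm{RV}_t)$ is a positive process (realized variance); $\mathcal{F}_t$ is the $\sigma$-algebra generated by $\{\epsilon_u,\mathrm{RV}_u:u\le t\}$. Parameters: $r\in\mathbb{R}$ (risk-free rate), $\lambda\in\mathbb{R}$, $\delta>0$, $\theta>0$, $d\ge0$, $\gamma\in\mathbb{R}$, integers $p,q\ge1$, $\beta_1,\dots,\beta_p\ge0$, $\alpha_1,\dots,\alpha_q\ge0$. Leverage: $\ell_t=(\epsilon_t-\gamma\sqrt{\mathrm{RV}_t})^2$. Log-returns: $y_{t+1}=\ln(S_{t+1}/S_t)=r+\lambda\mathrm{RV}_{t+1}+\sqrt{\mathrm{RV}_{t+1}}\,\epsilon_{t+1}$, with $\epsilon_{t+1}$ independent of $(\mathcal{F}_t,\mathrm{RV}_{t+1})$. Conditionally on $\mathcal{F}_t$, $\mathrm{RV}_{t+1}$ has the noncentral gamma law $\bar\gamma(\delta,\Theta_t,\theta)$ with $\Theta_t=d+\sum_{i=1}^p\beta_i\mathrm{RV}_{t+1-i}+\sum_{j=1}^q\alpha_j\ell_{t+1-j}$. Here $\bar\gamma(\delta,\Theta,\theta)$ (shape $\delta$, noncentrality $\Theta\ge0$, scale $\theta$) is the law of $\theta G$ where, conditionally on $N\sim\mathrm{Poisson}(\Theta)$, $G\sim\mathrm{Gamma}(\delta+N,1)$; for $X\sim\bar\gamma(\delta,\Theta,\theta)$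 and $\theta x<1$, $\mathbb{E}[e^{xX}]=\exp(-\delta w(x,\theta)+\Theta v(x,\theta))$, where $v(x,\theta)=\frac{\theta x}{1-\theta x}$ and $w(x,\theta)=\ln(1-\theta x)$. (In the heterogeneous LHARG model proper, $p=q=22$ with heterogeneous daily/weekly/monthly coefficient structure.) Stochastic discount factor: $M_{s,s+1}=e^{-\nu_1\mathrm{RV}_{s+1}-\nu_2y_{s+1}}/\mathbb{E}^{\mathbb{P}}[e^{-\nu_1\mathrm{RV}_{s+1}-\nu_2y_{s+1}}\mid\mathcal{F}_s]$; the measure $\mathbb{Q}$ is defined by $\mathbb{E}^{\mathbb{Q}}[X\mid\mathcal{F}_t]=\mathbb{E}^{\mathbb{P}}[M_{t,t+1}\cdots M_{T-1,T}X\mid\mathcal{F}_t]$ for $\mathcal{F}_T$-measurable $X$. *)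

theory Defs
  imports "HOL-Probability.Probability"
begin

definition vfun :: "real \<Rightarrow> real \<Rightarrow> real" where
  "vfun x \<theta> = \<theta> * x / (1 - \<theta> * x)"

definition wfun :: "real \<Rightarrow> real \<Rightarrow> real" where
  "wfun x \<theta> = ln (1 - \<theta> * x)"

definition gamma_scaled_density :: "real \<Rightarrow> real \<Rightarrow> real \<Rightarrow> real" where
  "gamma_scaled_density k \<theta> x =
     (if x > 0 then x powr (k - 1) * exp (- x / \<theta>) / (Gamma k * \<theta> powr k) else 0)"

text \<open>Noncentral gamma (shape delta, noncentrality Theta, scale theta): Poisson(Theta) mixture
  of the laws of theta*Gamma(delta+N,1).\<close>
definition ncgamma_density :: "real \<Rightarrow> real \<Rightarrow> real \<Rightarrow> real \<Rightarrow> real" where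
  "ncgamma_density \<delta> \<Theta> \<theta> x =
     (\<Sum>n. exp (- \<Theta>) * \<Theta> ^ n / fact n * gamma_scaled_density (\<delta> + real n) \<theta> x)"

definition ncgamma :: "real \<Rightarrow> real \<Rightarrow> real \<Rightarrow> real measure" where
  "ncgamma \<delta> \<Theta> \<theta> = density lborel (\<lambda>x. ennreal (ncgamma_density \<delta> \<Theta> \<theta> x))"

definition lev :: "real \<Rightarrow> (int \<Rightarrow> 'a \<Rightarrow> real) \<Rightarrow> (int \<Rightarrow> 'a \<Rightarrow> real) \<Rightarrow> int \<Rightarrow> 'a \<Rightarrow> real" where
  "lev \<gamma> eps RV t \<omega> = (eps t \<omega> - \<gamma> * sqrt (RV t \<omega>))\<^sup>2"

definition logret :: "real \<Rightarrow> real \<Rightarrow> (int \<Rightarrow> 'a \<Rightarrow> real) \<Rightarrow> (int \<Rightarrow> 'a \<Rightarrow> real) \<Rightarrow> int \<Rightarrow> 'a \<Rightarrow> real" where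
  "logret r lam eps RV s \<omega> = r + lam * RV s \<omega> + sqrt (RV s \<omega>) * eps s \<omega>"

definition Theta :: "real \<Rightarrow> nat \<Rightarrow> nat \<Rightarrow> (nat \<Rightarrow> real) \<Rightarrow> (nat \<Rightarrow> real) \<Rightarrow> real \<Rightarrow>
     (int \<Rightarrow> 'a \<Rightarrow> real) \<Rightarrow> (int \<Rightarrow> 'a \<Rightarrow> real) \<Rightarrow> int \<Rightarrow> 'a \<Rightarrow> real" where
  "Theta d p q \<beta> \<alpha> \<gamma> eps RV t \<omega> =
     d + (\<Sum>i=1..p. \<beta> i * RV (t + 1 - int i) \<omega>) + (\<Sum>j=1..q. \<alpha> j * lev \<gamma> eps RV (t + 1 - int j) \<omega>)"

definition gen_sets :: "'a measure \<Rightarrow> ('a \<Rightarrow> real) \<Rightarrow> 'a set set" where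
  "gen_sets M X = {X -` B \<inter> space M | B. B \<in> sets borel}"

definition filt :: "'a measure \<Rightarrow> (int \<Rightarrow> 'a \<Rightarrow> real) \<Rightarrow> (int \<Rightarrow> 'a \<Rightarrow> real) \<Rightarrow> int \<Rightarrow> 'a measure" where
  "filt M eps RV t = sigma (space M) (\<Union>u\<in>{..t}. gen_sets M (eps u) \<union> gen_sets M (RV u))"

definition filt_plus :: "'a measure \<Rightarrow> (int \<Rightarrow> 'a \<Rightarrow> real) \<Rightarrow> (int \<Rightarrow> 'a \<Rightarrow> real) \<Rightarrow> int \<Rightarrow> 'a measure" where
  "filt_plus M eps RV t = sigma (space M)
     ((\<Union>u\<in>{..t}. gen_sets M (eps u) \<union> gen_sets M (RV u)) \<union> gen_sets M (RV (t + 1)))"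

definition sdf :: "'a measure \<Rightarrow> real \<Rightarrow> real \<Rightarrow> real \<Rightarrow> real \<Rightarrow>
     (int \<Rightarrow> 'a \<Rightarrow> real) \<Rightarrow> (int \<Rightarrow> 'a \<Rightarrow> real) \<Rightarrow> int \<Rightarrow> 'a \<Rightarrow> real" where
  "sdf M r lam \<nu>1 \<nu>2 eps RV s \<omega> =
     exp (- \<nu>1 * RV (s + 1) \<omega> - \<nu>2 * logret r lam eps RV (s + 1) \<omega>) /
     real_cond_exp M (filt M eps RV s)
        (\<lambda>\<omega>'. exp (- \<nu>1 * RV (s + 1) \<omega>' - \<nu>2 * logret r lam eps RV (s + 1) \<omega>')) \<omega>"

text \<open>State after k backward steps from T, i.e. coefficients at time s = T - k.
  Components: (A*_s, B*_{s,.}, C*_{s,.}), with B, C indexed by 1..p resp. 1..q.\<close>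

definition Ystar :: "real \<Rightarrow> real \<Rightarrow> real \<Rightarrow> real" where
  "Ystar lam \<nu>1 \<nu>2 = - \<nu>2 * lam - \<nu>1 + 1/2 * \<nu>2\<^sup>2"

definition Xstar :: "real \<Rightarrow> real \<Rightarrow> real \<Rightarrow> real \<Rightarrow> real \<Rightarrow> real \<Rightarrow> real \<Rightarrow> real" where
  "Xstar lam \<gamma> \<nu>1 \<nu>2 z B1 C1 =
     (z - \<nu>2) * lam + B1 - \<nu>1 +
     (1/2 * (z - \<nu>2)\<^sup>2 + \<gamma>\<^sup>2 * C1 - 2 * C1 * \<gamma> * (z - \<nu>2)) / (1 - 2 * C1)"

fun coefs :: "real \<Rightarrow> real \<Rightarrow> real \<Rightarrow> real \<Rightarrow> real \<Rightarrow> real \<Rightarrow> nat \<Rightarrow> nat \<Rightarrow>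
     (nat \<Rightarrow> real) \<Rightarrow> (nat \<Rightarrow> real) \<Rightarrow> real \<Rightarrow> real \<Rightarrow> real \<Rightarrow> nat \<Rightarrow>
     real \<times> (nat \<Rightarrow> real) \<times> (nat \<Rightarrow> real)" where
  "coefs r lam \<delta> \<theta> d \<gamma> p q \<beta> \<alpha> \<nu>1 \<nu>2 z 0 = (0, (\<lambda>_. 0), (\<lambda>_. 0))"
| "coefs r lam \<delta> \<theta> d \<gamma> p q \<beta> \<alpha> \<nu>1 \<nu>2 z (Suc k) =
     (let (A, B, C) = coefs r lam \<delta> \<theta> d \<gamma> p q \<beta> \<alpha> \<nu>1 \<nu>2 z k;
          X = Xstar lam \<gamma> \<nu>1 \<nu>2 z (B 1) (C 1);
          Y = Ystar lam \<nu>1 \<nu>2;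
          D = vfun X \<theta> - vfun Y \<theta>
      in (A + z * r - 1/2 * ln (1 - 2 * C 1) - \<delta> * wfun X \<theta> + \<delta> * wfun Y \<theta>
            + d * vfun X \<theta> - d * vfun Y \<theta>,
          (\<lambda>i. if 1 \<le> i \<and> i \<le> p then (if i \<le> p - 1 then B (i + 1) else 0) + D * \<beta> i else 0),
          (\<lambda>j. if 1 \<le> j \<and> j \<le> q then (if j \<le> q - 1 then C (j + 1) else 0) + D * \<alpha> j else 0)))"

end

theory Submission
  imports Defs
begin

(*
  The proof is a backward induction over the number k = T - t of periods.
  One period is handled by an exact computation: conditionally on F_s, the
  innovation eps_{s+1} is standard normal and independent of RV_{s+1}, and
  RV_{s+1} is noncentral gamma with noncentrality Theta_s.  Integrating a
  quadratic exponential first against the Gaussian (completing the square)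
  and then against the noncentral gamma law (its MGF exp(-delta w + Theta v))
  maps an exponential-affine function of (RV, ell, eps) at time s+1 to an
  exponential-affine function of the F_s-measurable quantities
  RV_{s+1-i}, ell_{s+1-j}.
  Corollary 1 then follows by replacing the SDF by its explicit form.
*)

section \<open>Gaussian quadratic-exponential moments\<close>

text \<open>Completing the square: for c < 1/2 the standard normal density tilted by
  exp(c e^2 + b e) is a constant multiple of the density of N(b/(1-2c), 1/(1-2c)).\<close>

lemma std_normal_exp_quadratic:
  fixes c b e :: real
  assumes c: "c < 1/2"
  shows "std_normal_density e * exp (c*e\<^sup>2 + b*e)
       = (exp (b\<^sup>2/(2*(1-2*c))) / sqrt (1-2*c)) * normal_density (b / (1 - 2*c)) (1 / sqrt (1 - 2*c)) e"
proof -
  define sg where "sg = 1 / sqrt (1 - 2*c)"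
  define m where "m = b / (1 - 2*c)"
  have pc: "1 - 2*c > 0" using c by simp
  have sg_pos: "sg > 0" unfolding sg_def using pc by simp
  have s2: "sg\<^sup>2 = 1/(1-2*c)" unfolding sg_def using pc by (simp add: power_divide)
  have "std_normal_density e * exp (c*e\<^sup>2 + b*e) = (1/sqrt(2*pi)) * exp (- e\<^sup>2/2 + (c*e\<^sup>2 + b*e))"
    by (simp add: std_normal_density_def flip: exp_add)
  also have "- e\<^sup>2/2 + (c*e\<^sup>2 + b*e) = b\<^sup>2/(2*(1-2*c)) + (-(e - m)\<^sup>2 / (2* sg\<^sup>2))"
  proof -
    have "-(e - m)\<^sup>2 / (2 * sg\<^sup>2) = -(e - m)\<^sup>2 * (1-2*c) / 2" unfolding s2 using pc by simp
    moreover have "m * (1-2*c) = b" unfolding m_def using pc by simp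
    ultimately show ?thesis using pc by (simp add: field_simps power2_eq_square) algebra
  qed
  also have "(1/sqrt(2*pi)) * exp (b\<^sup>2/(2*(1-2*c)) + (-(e - m)\<^sup>2 / (2* sg\<^sup>2)))
     = (exp (b\<^sup>2/(2*(1-2*c))) / sqrt (1-2*c)) * normal_density m sg e"
  proof -
    have nd: "normal_density m sg e = exp (-(e - m)\<^sup>2 / (2 * sg\<^sup>2)) / (sqrt (2*pi) * sg)"
      using sg_pos by (simp add: normal_density_def real_sqrt_mult)
    have gen: "(1/sqrt(2*pi)) * exp (B + Q) = (exp B / sqrt (1-2*c)) * (exp Q / (sqrt (2*pi) * sg))" for B Q
      unfolding sg_def using pc by (simp add: exp_add)
    show ?thesis unfolding nd by (rule gen)
  qed
  finally show ?thesis unfolding m_def sg_def .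
qed

lemma gauss_mgf:
  fixes c b :: real
  assumes c: "c < 1/2"
  shows "(\<integral>\<^sup>+e. ennreal (std_normal_density e * exp (c*e\<^sup>2 + b*e)) \<partial>lborel)
         = ennreal (exp (b\<^sup>2/(2*(1-2*c))) / sqrt (1-2*c))"
proof -
  define sg where "sg = 1 / sqrt (1 - 2*c)"
  have pc: "1 - 2*c > 0" using c by simp
  have sg_pos: "sg > 0" unfolding sg_def using pc by simp
  have "(\<integral>\<^sup>+e. ennreal (normal_density (b / (1 - 2*c)) sg e) \<partial>lborel) = 1"
  proof -
    let ?N = "density lborel (normal_density (b / (1 - 2*c)) sg)"
    have "emeasure ?N (space ?N) = 1"
      using sg_pos by (intro prob_space.emeasure_space_1 prob_space_normal_density)
    then show ?thesis by (subst (asm) emeasure_density) auto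
  qed
  moreover have "(\<integral>\<^sup>+e. ennreal (std_normal_density e * exp (c*e\<^sup>2 + b*e)) \<partial>lborel)
     = ennreal (exp (b\<^sup>2/(2*(1-2*c))) / sqrt (1-2*c)) * (\<integral>\<^sup>+e. ennreal (normal_density (b / (1 - 2*c)) sg e) \<partial>lborel)"
    unfolding std_normal_exp_quadratic[OF c] sg_def using pc
    by (subst nn_integral_cmult[symmetric]) (auto simp: ennreal_mult[symmetric] intro!: nn_integral_cong)
  ultimately show ?thesis by simp
qed

text \<open>The coefficient produced by integrating out the innovation: for fixed x \<ge> 0,
  E[exp(a x + c (e - \<gamma> sqrt x)^2 + b sqrt x e)] = exp(gauss_coef \<gamma> a b c * x) / sqrt(1-2c).\<close>

definition gauss_coef :: "real \<Rightarrow> real \<Rightarrow> real \<Rightarrow> real \<Rightarrow> real" where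
  "gauss_coef \<gamma> a b c = a + c * \<gamma>\<^sup>2 + (b - 2*c*\<gamma>)\<^sup>2 / (2*(1 - 2*c))"

lemma gauss_leverage_moment:
  fixes a b c \<gamma> x :: real
  assumes c: "c < 1/2" and x: "x \<ge> 0"
  shows "(\<integral>\<^sup>+e. ennreal (std_normal_density e) * ennreal (exp (a*x + c*(e - \<gamma>* sqrt x)\<^sup>2 + b* sqrt x*e)) \<partial>lborel)
       = ennreal (exp (- 1/2 * ln (1 - 2*c) + gauss_coef \<gamma> a b c * x))"
proof -
  define \<beta> where "\<beta> = (b - 2*c*\<gamma>) * sqrt x"
  have sq: "(sqrt x)\<^sup>2 = x" using x by simp
  have e: "exp (a*x + c*(e - \<gamma>* sqrt x)\<^sup>2 + b* sqrt x*e) = exp (a*x + c*\<gamma>\<^sup>2*x) * exp (c*e\<^sup>2 + \<beta>*e)" for e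
  proof -
    have "a*x + c*(e - \<gamma>* sqrt x)\<^sup>2 + b* sqrt x*e = (a*x + c*\<gamma>\<^sup>2*x) + (c*e\<^sup>2 + \<beta>*e)"
      unfolding \<beta>_def using sq by (simp add: power2_eq_square algebra_simps)
    then show ?thesis by (simp only: exp_add[symmetric])
  qed
  have "(\<integral>\<^sup>+e. ennreal (std_normal_density e) * ennreal (exp (a*x + c*(e - \<gamma>* sqrt x)\<^sup>2 + b* sqrt x*e)) \<partial>lborel)
      = (\<integral>\<^sup>+e. ennreal (exp (a*x + c*\<gamma>\<^sup>2*x)) * ennreal (std_normal_density e * exp (c*e\<^sup>2 + \<beta>*e)) \<partial>lborel)"
    unfolding e by (intro nn_integral_cong) (simp add: ennreal_mult[symmetric] mult_ac)
  also have "\<dots> = ennreal (exp (a*x + c*\<gamma>\<^sup>2*x)) * ennreal (exp (\<beta>\<^sup>2/(2*(1-2*c))) / sqrt (1-2*c))"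
    by (subst nn_integral_cmult) (simp_all add: gauss_mgf[OF c])
  also have "\<dots> = ennreal (exp (gauss_coef \<gamma> a b c * x) / sqrt (1 - 2*c))"
  proof -
    have "\<beta>\<^sup>2 = (b - 2*c*\<gamma>)\<^sup>2 * x" unfolding \<beta>_def using sq by (simp add: power_mult_distrib)
    then have "a*x + c*\<gamma>\<^sup>2*x + \<beta>\<^sup>2/(2*(1-2*c)) = gauss_coef \<gamma> a b c * x"
      unfolding gauss_coef_def by (simp add: algebra_simps add_divide_distrib)
    then have "exp (a*x + c*\<gamma>\<^sup>2*x) * (exp (\<beta>\<^sup>2/(2*(1-2*c))) / sqrt (1-2*c)) = exp (gauss_coef \<gamma> a b c * x) / sqrt (1 - 2*c)"
      by (simp flip: exp_add)
    then show ?thesis by (subst ennreal_mult[symmetric]) (simp_all only: exp_ge_zero, use c in simp)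
  qed
  also have "exp (gauss_coef \<gamma> a b c * x) / sqrt (1 - 2*c) = exp (- 1/2 * ln (1 - 2*c) + gauss_coef \<gamma> a b c * x)"
  proof -
    have root: "exp (- 1/2 * ln (1 - 2*c)) = 1 / sqrt (1 - 2*c)"
      using c by (simp add: exp_minus ln_sqrt[symmetric] inverse_eq_divide)
    show ?thesis unfolding exp_add root by simp
  qed
  finally show ?thesis .
qed

section \<open>The noncentral gamma law\<close>

text \<open>Laplace transform of the gamma kernel: the integral of x^(k-1) exp(-a x) over [0,\<infinity>)
  is Gamma(k) / a^k, obtained from the Euler integral by the substitution x = t / a.\<close>

lemma gamma_kernel_integral:
  fixes k a :: real
  assumes k: "k > 0" and a: "a > 0"
  shows "(\<integral>\<^sup>+x. ennreal (x powr (k - 1) * exp (- a * x)) * indicator {0..} x \<partial>lborel)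
         = ennreal (Gamma k / a powr k)"
proof -
  have G: "(\<integral>\<^sup>+t. ennreal (t powr (k - 1) / exp t) * indicator {0..} t \<partial>lborel) = ennreal (Gamma k)"
    by (rule nn_integral_has_integral_lebesgue'[OF _ Gamma_integral_real[OF k]]) simp
  have "(\<integral>\<^sup>+t. ennreal (t powr (k - 1) / exp t) * indicator {0..} t \<partial>lborel)
      = ennreal a * (\<integral>\<^sup>+x. ennreal ((0 + a*x) powr (k - 1) / exp (0 + a*x)) * indicator {0..} (0 + a*x) \<partial>lborel)"
    using a by (subst nn_integral_real_affine[where c=a and t=0]) auto
  also have "\<dots> = ennreal a * (\<integral>\<^sup>+x. ennreal (a powr (k-1)) * (ennreal (x powr (k - 1) * exp (- a * x)) * indicator {0..} x) \<partial>lborel)"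
  proof -
    have "ennreal ((0 + a*x) powr (k - 1) / exp (0 + a*x)) * indicator {0..} (0 + a*x)
        = ennreal (a powr (k-1)) * (ennreal (x powr (k - 1) * exp (- a * x)) * indicator {0..} x)" for x
    proof (cases "x \<ge> 0")
      case True
      then show ?thesis using a
        by (simp add: powr_mult exp_minus field_simps ennreal_mult[symmetric] indicator_def)
    next
      case False
      then have "\<not> (0 \<le> a * x)" using a by (simp add: zero_le_mult_iff)
      then show ?thesis using False by (simp add: indicator_def)
    qed
    then show ?thesis by simp
  qed
  also have "\<dots> = ennreal (a * a powr (k-1)) * (\<integral>\<^sup>+x. ennreal (x powr (k - 1) * exp (- a * x)) * indicator {0..} x \<partial>lborel)"
    using a by (simp add: nn_integral_cmult ennreal_mult mult.assoc)
  also have "a * a powr (k-1) = a powr k" using a by (simp add: powr_diff)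
  finally have "ennreal (Gamma k) = ennreal (a powr k) * (\<integral>\<^sup>+x. ennreal (x powr (k - 1) * exp (- a * x)) * indicator {0..} x \<partial>lborel)"
    using G by simp
  then have "ennreal (Gamma k) / ennreal (a powr k) = (\<integral>\<^sup>+x. ennreal (x powr (k - 1) * exp (- a * x)) * indicator {0..} x \<partial>lborel)"
    using a by (simp add: mult.commute[of "ennreal (a powr k)"] ennreal_mult_divide_eq)
  then show ?thesis using a Gamma_real_pos[OF k] by (simp add: divide_ennreal)
qed

lemma scaled_gamma_mgf:
  fixes k \<theta> u :: real
  assumes k: "k > 0" and th: "\<theta> > 0" and u: "\<theta> * u < 1"
  shows "(\<integral>\<^sup>+x. ennreal (gamma_scaled_density k \<theta> x * exp (u*x)) \<partial>lborel)
         = ennreal ((1 - \<theta>*u) powr (-k))"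
proof -
  define a where "a = (1 - \<theta>*u) / \<theta>"
  have a: "a > 0" unfolding a_def using th u by simp
  have Gp: "Gamma k > 0" using k by simp
  have eq: "ennreal (gamma_scaled_density k \<theta> x * exp (u*x))
      = ennreal (1 / (Gamma k * \<theta> powr k)) * (ennreal (x powr (k - 1) * exp (- a * x)) * indicator {0..} x)" for x
  proof (cases "x > 0")
    case True
    have "exp (- x / \<theta>) * exp (u*x) = exp (- a * x)"
      unfolding a_def using th by (simp add: field_simps flip: exp_add)
    then have "gamma_scaled_density k \<theta> x * exp (u*x) = (1 / (Gamma k * \<theta> powr k)) * (x powr (k - 1) * exp (- a * x))"
      using True by (simp add: gamma_scaled_density_def field_simps)
    then show ?thesis using True Gp th by (simp add: ennreal_mult[symmetric] indicator_def)
  next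
    case False
    then show ?thesis by (cases "x = 0") (auto simp: gamma_scaled_density_def indicator_def)
  qed
  have "(\<integral>\<^sup>+x. ennreal (gamma_scaled_density k \<theta> x * exp (u*x)) \<partial>lborel)
     = ennreal (1 / (Gamma k * \<theta> powr k)) * ennreal (Gamma k / a powr k)"
    using gamma_kernel_integral[OF k a] unfolding eq by (subst nn_integral_cmult) simp_all
  also have "\<dots> = ennreal (1 / (Gamma k * \<theta> powr k) * (Gamma k / a powr k))"
    using Gp th a by (simp add: ennreal_mult[symmetric])
  also have "1 / (Gamma k * \<theta> powr k) * (Gamma k / a powr k) = 1 / (\<theta> * a) powr k"
    using Gp th a by (simp add: powr_mult)
  also have "\<theta> * a = 1 - \<theta>*u" unfolding a_def using th by simp
  also have "1 / (1 - \<theta>*u) powr k = (1 - \<theta>*u) powr (-k)" using u by (simp add: powr_minus_divide)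
  finally show ?thesis .
qed

definition ncgamma_term :: "real \<Rightarrow> real \<Rightarrow> real \<Rightarrow> nat \<Rightarrow> real \<Rightarrow> real" where
  "ncgamma_term \<delta> \<Theta> \<theta> n x = exp (- \<Theta>) * \<Theta> ^ n / fact n * gamma_scaled_density (\<delta> + real n) \<theta> x"

lemma ncgamma_density_eq: "ncgamma_density \<delta> \<Theta> \<theta> x = (\<Sum>n. ncgamma_term \<delta> \<Theta> \<theta> n x)"
  unfolding ncgamma_density_def ncgamma_term_def ..

lemma ncgamma_term_nonneg:
  assumes "\<delta> > 0" "\<theta> > 0" "\<Theta> \<ge> 0"
  shows "ncgamma_term \<delta> \<Theta> \<theta> n x \<ge> 0"
proof -
  have "Gamma (\<delta> + real n) > 0" using assms by simp
  then show ?thesis unfolding ncgamma_term_def gamma_scaled_density_def using assms by simp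
qed

text \<open>Gamma(\<delta> + n) grows at least geometrically; this dominates the terms by an
  exponential series.\<close>

lemma Gamma_shift_lower:
  fixes \<delta> :: real
  assumes d: "\<delta> > 0"
  shows "Gamma (\<delta> + real n) \<ge> Gamma \<delta> * (min \<delta> 1) ^ n"
proof (induction n)
  case 0 then show ?case by simp
next
  case (Suc n)
  have nz: "\<delta> + real n \<notin> \<int>\<^sub>\<le>\<^sub>0" using d nonpos_Ints_nonpos by fastforce
  have "Gamma (\<delta> + real (Suc n)) = (\<delta> + real n) * Gamma (\<delta> + real n)"
  proof -
    have "\<delta> + real (Suc n) = (\<delta> + real n) + 1" by simp
    then show ?thesis by (simp only: Gamma_plus1[OF nz])
  qed
  also have "\<dots> \<ge> min \<delta> 1 * (Gamma \<delta> * (min \<delta> 1) ^ n)"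
    using Suc.IH d by (intro mult_mono) (auto simp: less_imp_le)
  finally show ?case by (simp add: mult_ac)
qed

lemma ncgamma_term_bound:
  fixes \<delta> \<Theta> \<theta> x :: real
  assumes d: "\<delta> > 0" and th: "\<theta> > 0" and T: "\<Theta> \<ge> 0" and x: "x > 0"
  defines "C \<equiv> exp (- \<Theta>) * x powr (\<delta> - 1) * exp (- x / \<theta>) / (Gamma \<delta> * \<theta> powr \<delta>)"
    and "y \<equiv> \<Theta> * x / (\<theta> * min \<delta> 1)"
  shows "ncgamma_term \<delta> \<Theta> \<theta> n x \<le> C * (inverse (fact n) * y ^ n)"
proof -
  define m where "m = min \<delta> 1"
  have m: "m > 0" unfolding m_def using d by simp
  have Gp: "Gamma \<delta> > 0" using d by simp
  have Gn: "Gamma (\<delta> + real n) \<ge> Gamma \<delta> * m ^ n" unfolding m_def by (rule Gamma_shift_lower[OF d])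
  have Gnp: "Gamma (\<delta> + real n) > 0" using d by simp
  have xp: "x powr (\<delta> + real n - 1) = x powr (\<delta> - 1) * x ^ n"
  proof -
    have "\<delta> + real n - 1 = (\<delta> - 1) + real n" by simp
    then show ?thesis using x by (simp only: powr_add powr_realpow)
  qed
  have tp: "\<theta> powr (\<delta> + real n) = \<theta> powr \<delta> * \<theta> ^ n"
    using th by (simp add: powr_add powr_realpow)
  have "ncgamma_term \<delta> \<Theta> \<theta> n x
      = (exp (- \<Theta>) * x powr (\<delta> - 1) * exp (- x / \<theta>) / (\<theta> powr \<delta>)) * ((\<Theta> * x / \<theta>) ^ n / fact n) / Gamma (\<delta> + real n)"
    using x th by (simp add: ncgamma_term_def gamma_scaled_density_def xp tp field_simps power_mult_distrib power_divide)
  also have "\<dots> \<le> (exp (- \<Theta>) * x powr (\<delta> - 1) * exp (- x / \<theta>) / (\<theta> powr \<delta>)) * ((\<Theta> * x / \<theta>) ^ n / fact n) / (Gamma \<delta> * m ^ n)"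
    using Gn Gp m T th x Gnp by (intro divide_left_mono) (auto intro!: mult_nonneg_nonneg mult_pos_pos)
  also have "\<dots> = C * (inverse (fact n) * y ^ n)"
    unfolding C_def y_def m_def[symmetric] using m th by (simp add: field_simps power_mult_distrib power_divide)
  finally show ?thesis .
qed

lemma ncgamma_series_summable:
  assumes d: "\<delta> > 0" and th: "\<theta> > 0" and T: "\<Theta> \<ge> 0"
  shows "summable (\<lambda>n. ncgamma_term \<delta> \<Theta> \<theta> n x)"
proof (cases "x > 0")
  case False
  then show ?thesis by (simp add: ncgamma_term_def gamma_scaled_density_def)
next
  case True
  have "norm (ncgamma_term \<delta> \<Theta> \<theta> n x)
      \<le> exp (- \<Theta>) * x powr (\<delta> - 1) * exp (- x / \<theta>) / (Gamma \<delta> * \<theta> powr \<delta>)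
        * (inverse (fact n) * (\<Theta> * x / (\<theta> * min \<delta> 1)) ^ n)" for n
    using ncgamma_term_bound[OF d th T True] ncgamma_term_nonneg[OF d th T] by simp
  then show ?thesis
    by (rule summable_comparison_test'[OF summable_mult[OF summable_exp]])
qed

lemma gamma_scaled_density_measurable[measurable]:
  "(\<lambda>x. gamma_scaled_density k \<theta> x) \<in> borel_measurable borel"
  unfolding gamma_scaled_density_def by measurable

lemma ncgamma_density_measurable_pair:
  "(\<lambda>p. ncgamma_density \<delta> (fst p) \<theta> (snd p)) \<in> borel_measurable (borel \<Otimes>\<^sub>M borel)"
  unfolding ncgamma_density_def by measurable

lemma ncgamma_density_measurable[measurable]:
  "ncgamma_density \<delta> \<Theta> \<theta> \<in> borel_measurable borel"
  unfolding ncgamma_density_def by measurable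

lemma ncgamma_term_mgf:
  assumes d: "\<delta> > 0" and th: "\<theta> > 0" and T: "\<Theta> \<ge> 0" and u: "\<theta> * u < 1"
  defines "q \<equiv> 1 - \<theta> * u"
  shows "(\<integral>\<^sup>+x. ennreal (ncgamma_term \<delta> \<Theta> \<theta> n x * exp (u*x)) \<partial>lborel)
       = ennreal (exp (- \<Theta>) * q powr (-\<delta>) * ((\<Theta> / q) ^ n / fact n))"
proof -
  have q: "q > 0" unfolding q_def using u by simp
  have w: "exp (- \<Theta>) * \<Theta> ^ n / fact n \<ge> 0" using T by simp
  have "(\<integral>\<^sup>+x. ennreal (ncgamma_term \<delta> \<Theta> \<theta> n x * exp (u*x)) \<partial>lborel)
      = (\<integral>\<^sup>+x. ennreal (exp (- \<Theta>) * \<Theta> ^ n / fact n) * ennreal (gamma_scaled_density (\<delta> + real n) \<theta> x * exp (u*x)) \<partial>lborel)"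
    unfolding ncgamma_term_def by (intro nn_integral_cong, subst ennreal_mult'[OF w, symmetric]) (simp add: mult_ac)
  also have "\<dots> = ennreal (exp (- \<Theta>) * \<Theta> ^ n / fact n) * ennreal (q powr (- (\<delta> + real n)))"
    using d th u unfolding q_def by (subst nn_integral_cmult) (simp_all add: scaled_gamma_mgf)
  also have "\<dots> = ennreal (exp (- \<Theta>) * \<Theta> ^ n / fact n * q powr (- (\<delta> + real n)))"
    by (rule ennreal_mult'[OF w, symmetric])
  also have "exp (- \<Theta>) * \<Theta> ^ n / fact n * q powr (- (\<delta> + real n)) = exp (- \<Theta>) * q powr (-\<delta>) * ((\<Theta> / q) ^ n / fact n)"
  proof -
    have "q powr (- (\<delta> + real n)) = q powr (-\<delta>) * q powr (- real n)"
      by (simp add: powr_add[symmetric])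
    also have "q powr (- real n) = inverse (q ^ n)" using q by (simp add: powr_minus powr_realpow)
    finally show ?thesis using q by (simp add: power_divide field_simps)
  qed
  finally show ?thesis .
qed

text \<open>MGF of the noncentral gamma law: integrate the Poisson mixture term by term and
  resum the exponential series, giving exp(-\<delta> w(u,\<theta>) + \<Theta> v(u,\<theta>)).\<close>

lemma ncgamma_mgf:
  fixes \<delta> \<Theta> \<theta> u :: real
  assumes d: "\<delta> > 0" and th: "\<theta> > 0" and T: "\<Theta> \<ge> 0" and u: "\<theta> * u < 1"
  shows "(\<integral>\<^sup>+x. ennreal (exp (u*x)) \<partial>ncgamma \<delta> \<Theta> \<theta>)
         = ennreal (exp (- \<delta> * wfun u \<theta> + \<Theta> * vfun u \<theta>))"
proof -
  define q where "q = 1 - \<theta> * u"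
  have q: "q > 0" unfolding q_def using u by simp
  note summable = ncgamma_series_summable[OF d th T] and nonneg = ncgamma_term_nonneg[OF d th T]
  have expand: "ennreal (ncgamma_density \<delta> \<Theta> \<theta> x) * ennreal (exp (u*x))
      = (\<Sum>n. ennreal (ncgamma_term \<delta> \<Theta> \<theta> n x * exp (u*x)))" for x
  proof -
    have "ennreal (ncgamma_density \<delta> \<Theta> \<theta> x) * ennreal (exp (u*x)) = ennreal ((\<Sum>n. ncgamma_term \<delta> \<Theta> \<theta> n x) * exp (u*x))"
      unfolding ncgamma_density_eq using summable nonneg by (simp add: ennreal_mult suminf_nonneg)
    also have "\<dots> = ennreal (\<Sum>n. ncgamma_term \<delta> \<Theta> \<theta> n x * exp (u*x))"
      by (simp only: suminf_mult2[OF summable])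
    also have "\<dots> = (\<Sum>n. ennreal (ncgamma_term \<delta> \<Theta> \<theta> n x * exp (u*x)))"
      by (rule suminf_ennreal2[symmetric]) (auto intro: nonneg summable_mult2[OF summable] mult_nonneg_nonneg)
    finally show ?thesis .
  qed
  have resum: "(\<lambda>n. exp (- \<Theta>) * q powr (-\<delta>) * ((\<Theta> / q) ^ n / fact n)) sums (exp (- \<Theta>) * q powr (-\<delta>) * exp (\<Theta> / q))"
    by (rule sums_mult) (use exp_converges[of "\<Theta>/q"] in \<open>simp add: divide_inverse mult.commute\<close>)
  have "(\<integral>\<^sup>+x. ennreal (exp (u*x)) \<partial>ncgamma \<delta> \<Theta> \<theta>)
      = (\<integral>\<^sup>+x. ennreal (ncgamma_density \<delta> \<Theta> \<theta> x) * ennreal (exp (u*x)) \<partial>lborel)"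
    unfolding ncgamma_def by (subst nn_integral_density) auto
  also have "\<dots> = (\<Sum>n. \<integral>\<^sup>+x. ennreal (ncgamma_term \<delta> \<Theta> \<theta> n x * exp (u*x)) \<partial>lborel)"
    unfolding expand by (rule nn_integral_suminf) (simp add: ncgamma_term_def)
  also have "\<dots> = (\<Sum>n. ennreal (exp (- \<Theta>) * q powr (-\<delta>) * ((\<Theta> / q) ^ n / fact n)))"
    unfolding q_def by (simp add: ncgamma_term_mgf[OF d th T u])
  also have "\<dots> = ennreal (exp (- \<Theta>) * q powr (-\<delta>) * exp (\<Theta> / q))"
    using resum q T by (subst suminf_ennreal2) (auto simp: sums_iff)
  also have "exp (- \<Theta>) * q powr (-\<delta>) * exp (\<Theta> / q) = exp (- \<delta> * wfun u \<theta> + \<Theta> * vfun u \<theta>)"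
  proof -
    have "q powr (-\<delta>) = exp (- \<delta> * ln q)" using q by (simp add: powr_def)
    moreover have "- \<Theta> + \<Theta> / q = \<Theta> * vfun u \<theta>"
      unfolding vfun_def q_def[symmetric] using q by (simp add: field_simps q_def)
    ultimately show ?thesis unfolding wfun_def q_def[symmetric]
      by (simp flip: exp_add add: algebra_simps)
  qed
  finally show ?thesis .
qed

text \<open>Evaluating the MGF at 0 shows that ncgamma is a probability law.\<close>

lemma prob_space_ncgamma:
  assumes d: "\<delta> > 0" and th: "\<theta> > 0" and T: "\<Theta> \<ge> 0"
  shows "prob_space (ncgamma \<delta> \<Theta> \<theta>)"
proof
  have "emeasure (ncgamma \<delta> \<Theta> \<theta>) (space (ncgamma \<delta> \<Theta> \<theta>)) = (\<integral>\<^sup>+x. ennreal (exp (0*x)) \<partial>ncgamma \<delta> \<Theta> \<theta>)"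
    by simp
  also have "\<dots> = 1" using ncgamma_mgf[OF d th T, of 0] th by (simp add: wfun_def vfun_def)
  finally show "emeasure (ncgamma \<delta> \<Theta> \<theta>) (space (ncgamma \<delta> \<Theta> \<theta>)) = 1" .
qed

lemma nn_integral_ncgamma:
  "g \<in> borel_measurable borel \<Longrightarrow>
   (\<integral>\<^sup>+x. g x \<partial>ncgamma \<delta> \<Theta> \<theta>) = (\<integral>\<^sup>+x. ennreal (ncgamma_density \<delta> \<Theta> \<theta> x) * g x \<partial>lborel)"
  unfolding ncgamma_def by (subst nn_integral_density) auto

lemma ncgamma_density_measurable_comp:
  assumes f[measurable]: "f \<in> borel_measurable N"
  shows "(\<lambda>(\<omega>, x). ennreal (ncgamma_density \<delta> (f \<omega>) \<theta> x)) \<in> borel_measurable (N \<Otimes>\<^sub>M lborel)"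
proof -
  have "(\<lambda>p. (f (fst p), snd p)) \<in> measurable (N \<Otimes>\<^sub>M lborel) (borel \<Otimes>\<^sub>M borel)"
    by measurable
  from measurable_comp[OF this ncgamma_density_measurable_pair]
  show ?thesis by (simp add: o_def case_prod_beta')
qed

lemma measurable_sigma_gen:
  assumes X: "X \<in> borel_measurable M" and G: "G \<subseteq> Pow (space M)" and sub: "gen_sets M X \<subseteq> G"
  shows "X \<in> borel_measurable (sigma (space M) G)"
proof (rule measurableI)
  fix B :: "real set" assume "B \<in> sets borel"
  then have "X -` B \<inter> space M \<in> G" using sub unfolding gen_sets_def by blast
  then show "X -` B \<inter> space (sigma (space M) G) \<in> sets (sigma (space M) G)"
    using G by (simp add: sigma_sets.Basic)
qed auto

lemma gen_sets_sub: "X \<in> borel_measurable M \<Longrightarrow> gen_sets M X \<subseteq> sets M"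
  unfolding gen_sets_def by (auto intro: measurable_sets)

lemma gen_sets_Pow: "gen_sets M X \<subseteq> Pow (space M)"
  unfolding gen_sets_def by auto

locale lharg_model =
  fixes M :: "'a measure" and eps RV :: "int \<Rightarrow> 'a \<Rightarrow> real"
    and \<delta> \<theta> d \<gamma> :: real and p q :: nat and \<beta> \<alpha> :: "nat \<Rightarrow> real"
  assumes prob: "prob_space M"
    and eps_meas: "\<And>u. eps u \<in> borel_measurable M"
    and RV_meas: "\<And>u. RV u \<in> borel_measurable M"
    and RV_pos: "\<And>u \<omega>. \<omega> \<in> space M \<Longrightarrow> RV u \<omega> > 0"
    and params: "\<delta> > 0" "\<theta> > 0" "d \<ge> 0"
    and beta_nn: "\<And>i. 1 \<le> i \<Longrightarrow> i \<le> p \<Longrightarrow> \<beta> i \<ge> 0"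
    and alpha_nn: "\<And>j. 1 \<le> j \<Longrightarrow> j \<le> q \<Longrightarrow> \<alpha> j \<ge> 0"
    and eps_normal: "\<And>u. distributed M lborel (eps u) std_normal_density"
    and eps_indep_past: "\<And>s. prob_space.indep_set M (gen_sets M (eps (s + 1)))
                                   (sets (filt_plus M eps RV s))"
    and RV_cond_law: "\<And>s B. B \<in> sets borel \<Longrightarrow>
        AE \<omega> in M. real_cond_exp M (filt M eps RV s) (\<lambda>\<omega>'. indicator B (RV (s + 1) \<omega>')) \<omega>
                   = measure (ncgamma \<delta> (Theta d p q \<beta> \<alpha> \<gamma> eps RV s \<omega>) \<theta>) B"
begin

sublocale prob_space M by (rule prob)

abbreviation "F s \<equiv> filt M eps RV s"
abbreviation "Fp s \<equiv> filt_plus M eps RV s"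
abbreviation "Th s \<equiv> Theta d p q \<beta> \<alpha> \<gamma> eps RV s"
abbreviation "ell u \<equiv> lev \<gamma> eps RV u"

definition genF :: "int \<Rightarrow> 'a set set" where
  "genF s = (\<Union>u\<in>{..s}. gen_sets M (eps u) \<union> gen_sets M (RV u))"

lemma genF_Pow: "genF s \<subseteq> Pow (space M)" unfolding genF_def using gen_sets_Pow by blast
lemma genF_sets: "genF s \<subseteq> sets M" unfolding genF_def using gen_sets_sub eps_meas RV_meas by blast

lemma F_eq: "F s = sigma (space M) (genF s)" unfolding filt_def genF_def ..
lemma Fp_eq: "Fp s = sigma (space M) (genF s \<union> gen_sets M (RV (s+1)))" unfolding filt_plus_def genF_def ..

lemma space_F[simp]: "space (F s) = space M" unfolding F_eq using genF_Pow by simp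
lemma space_Fp[simp]: "space (Fp s) = space M" unfolding Fp_eq by (simp add: space_measure_of_conv)

lemma sets_F: "sets (F s) = sigma_sets (space M) (genF s)" unfolding F_eq using genF_Pow by simp
lemma sets_Fp: "sets (Fp s) = sigma_sets (space M) (genF s \<union> gen_sets M (RV (s+1)))"
proof -
  have "genF s \<union> gen_sets M (RV (s+1)) \<subseteq> Pow (space M)" using genF_Pow gen_sets_Pow by blast
  then show ?thesis unfolding Fp_eq by (simp add: sets_measure_of)
qed

lemma sets_F_sub: "sets (F s) \<subseteq> sets M"
  unfolding sets_F by (rule sets.sigma_sets_subset[OF genF_sets])
lemma sets_Fp_sub: "sets (Fp s) \<subseteq> sets M"
  unfolding sets_Fp by (rule sets.sigma_sets_subset) (use genF_sets gen_sets_sub RV_meas in blast)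

lemma genF_mono: "s \<le> s' \<Longrightarrow> genF s \<subseteq> genF s'" unfolding genF_def by (rule UN_mono) auto

lemma F_mono_sets: "s \<le> s' \<Longrightarrow> sets (F s) \<subseteq> sets (F s')"
  unfolding sets_F by (rule sigma_sets_mono') (use genF_mono in auto)

lemma F_Fp_sets: "sets (F s) \<subseteq> sets (Fp s)"
  unfolding sets_F sets_Fp by (rule sigma_sets_mono') auto

lemma subalg_F: "subalgebra M (F s)" unfolding subalgebra_def using sets_F_sub by simp
lemma subalg_FF: "s \<le> s' \<Longrightarrow> subalgebra (F s') (F s)" unfolding subalgebra_def using F_mono_sets by simp

lemma sfs_F: "sigma_finite_subalgebra M (F s)"
  by (rule finite_measure_subalgebra_is_sigma_finite)
     (simp add: finite_measure_subalgebra_def finite_measure_subalgebra_axioms_def subalg_F finite_measure_axioms)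

lemma eps_F: "u \<le> s \<Longrightarrow> eps u \<in> borel_measurable (F s)"
  unfolding F_eq by (rule measurable_sigma_gen[OF eps_meas genF_Pow]) (auto simp: genF_def)
lemma RV_F: "u \<le> s \<Longrightarrow> RV u \<in> borel_measurable (F s)"
  unfolding F_eq by (rule measurable_sigma_gen[OF RV_meas genF_Pow]) (auto simp: genF_def)

lemma meas_F_Fp: "f \<in> borel_measurable (F s) \<Longrightarrow> f \<in> borel_measurable (Fp s)"
  by (rule measurable_from_subalg[of "Fp s" "F s"]) (simp_all add: subalgebra_def F_Fp_sets)
lemma meas_F_M: "f \<in> borel_measurable (F s) \<Longrightarrow> f \<in> borel_measurable M"
  by (rule measurable_from_subalg[OF subalg_F])
lemma meas_F_mono: "f \<in> borel_measurable (F s) \<Longrightarrow> s \<le> s' \<Longrightarrow> f \<in> borel_measurable (F s')"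
  by (rule measurable_from_subalg[OF subalg_FF])

lemma RV_Fp: "RV (s+1) \<in> borel_measurable (Fp s)"
  unfolding Fp_eq by (rule measurable_sigma_gen[OF RV_meas]) (use genF_Pow gen_sets_Pow in blast)+

lemma ell_F: "u \<le> s \<Longrightarrow> ell u \<in> borel_measurable (F s)"
  unfolding lev_def using eps_F RV_F by measurable

lemma Th_F: "Th s \<in> borel_measurable (F s)"
  unfolding Theta_def
proof (intro borel_measurable_add borel_measurable_sum borel_measurable_times borel_measurable_const)
  show "RV (s + 1 - int i) \<in> borel_measurable (F s)" if "i \<in> {1..p}" for i
    using that by (intro RV_F) auto
  show "ell (s + 1 - int j) \<in> borel_measurable (F s)" if "j \<in> {1..q}" for j
    using that by (intro ell_F) auto
qed

lemma Th_nn: "\<omega> \<in> space M \<Longrightarrow> Th s \<omega> \<ge> 0"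
  unfolding Theta_def using params beta_nn alpha_nn RV_pos
  by (intro add_nonneg_nonneg sum_nonneg mult_nonneg_nonneg) (auto simp: lev_def less_imp_le)

lemma Th_M[measurable]: "Th s \<in> borel_measurable M" by (rule meas_F_M[OF Th_F])
lemmas [measurable] = eps_meas RV_meas

end

section \<open>The conditional law of realized variance\<close>

text \<open>The hypothesis on the conditional law of RV_{s+1} is stated for indicators only;
  here it is turned into the statement that nn_cond_exp of g(RV_{s+1}) given F_s is the
  integral of g against ncgamma(\<delta>, Theta_s, \<theta>), for every measurable g \<ge> 0.\<close>

context lharg_model begin

lemma ncgamma_integral_measurable:
  assumes g[measurable]: "g \<in> borel_measurable borel"
  shows "(\<lambda>\<omega>. \<integral>\<^sup>+x. g x \<partial>ncgamma \<delta> (Th s \<omega>) \<theta>) \<in> borel_measurable (F s)"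
proof -
  have [measurable]: "(\<lambda>(\<omega>, x). ennreal (ncgamma_density \<delta> (Th s \<omega>) \<theta> x)) \<in> borel_measurable (F s \<Otimes>\<^sub>M lborel)"
    by (rule ncgamma_density_measurable_comp[OF Th_F])
  have "(\<lambda>(\<omega>, x). ennreal (ncgamma_density \<delta> (Th s \<omega>) \<theta> x) * g x) \<in> borel_measurable (F s \<Otimes>\<^sub>M lborel)"
    by measurable
  then show ?thesis
    by (subst nn_integral_ncgamma[OF g]) (rule lborel.borel_measurable_nn_integral)
qed

lemma prob_space_ncgamma_Th: "\<omega> \<in> space M \<Longrightarrow> prob_space (ncgamma \<delta> (Th s \<omega>) \<theta>)"
  using prob_space_ncgamma params Th_nn by simp

end

lemma (in prob_space) nn_integral_set_bounded:
  assumes f: "f \<in> borel_measurable M" and bnd: "\<And>\<omega>. \<omega> \<in> space M \<Longrightarrow> 0 \<le> f \<omega> \<and> f \<omega> \<le> 1"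
    and A: "A \<in> sets M"
  shows "(\<integral>\<^sup>+\<omega>. ennreal (indicator A \<omega> * f \<omega>) \<partial>M) = ennreal (\<integral>\<omega>\<in>A. f \<omega> \<partial>M)"
proof -
  have "integrable M f"
    by (rule integrable_const_bound[where B=1]) (use f bnd in \<open>auto intro!: AE_I2\<close>)
  from integrable_mult_indicator[OF A this]
  have "(\<integral>\<^sup>+\<omega>. ennreal (indicator A \<omega> * f \<omega>) \<partial>M) = ennreal (\<integral>\<omega>. indicator A \<omega> * f \<omega> \<partial>M)"
    by (intro nn_integral_eq_integral) (use bnd in \<open>auto intro!: AE_I2\<close>)
  then show ?thesis by (simp add: set_lebesgue_integral_def)
qed

context lharg_model begin

lemma ncgamma_measure_measurable:
  assumes B: "B \<in> sets borel"
  shows "(\<lambda>\<omega>. measure (ncgamma \<delta> (Th s \<omega>) \<theta>) B) \<in> borel_measurable M"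
proof -
  have B_ncg: "B \<in> sets (ncgamma \<delta> \<Theta> \<theta>)" for \<Theta> using B unfolding ncgamma_def by simp
  have "(\<lambda>\<omega>. \<integral>\<^sup>+x. indicator B x \<partial>ncgamma \<delta> (Th s \<omega>) \<theta>) \<in> borel_measurable M"
    by (rule meas_F_M[OF ncgamma_integral_measurable]) (use B in simp)
  from borel_measurable_enn2real[OF this] show ?thesis
    by (simp add: nn_integral_indicator[OF B_ncg] measure_def)
qed

lemma cond_law_ind:
  assumes A: "A \<in> sets (F s)" and B: "B \<in> sets borel"
  shows "(\<integral>\<^sup>+\<omega>. indicator A \<omega> * indicator B (RV (s+1) \<omega>) \<partial>M)
       = (\<integral>\<^sup>+\<omega>. indicator A \<omega> * emeasure (ncgamma \<delta> (Th s \<omega>) \<theta>) B \<partial>M)"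
proof -
  interpret S: sigma_finite_subalgebra M "F s" by (rule sfs_F)
  have AM: "A \<in> sets M" using A sets_F_sub by blast
  define f :: "'a \<Rightarrow> real" where "f \<omega> = indicator B (RV (s+1) \<omega>)" for \<omega>
  define h where "h \<omega> = measure (ncgamma \<delta> (Th s \<omega>) \<theta>) B" for \<omega>
  have f_meas: "f \<in> borel_measurable M" unfolding f_def using B by measurable
  have h_meas: "h \<in> borel_measurable M" unfolding h_def by (rule ncgamma_measure_measurable[OF B])
  have h_bounds: "0 \<le> h \<omega> \<and> h \<omega> \<le> 1" if "\<omega> \<in> space M" for \<omega>
  proof -
    interpret N: prob_space "ncgamma \<delta> (Th s \<omega>) \<theta>" using that by (rule prob_space_ncgamma_Th)
    show ?thesis unfolding h_def by simp
  qed
  have "(\<integral>\<^sup>+\<omega>. indicator A \<omega> * indicator B (RV (s+1) \<omega>) \<partial>M) = (\<integral>\<^sup>+\<omega>. ennreal (indicator A \<omega> * f \<omega>) \<partial>M)"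
    unfolding f_def by (intro nn_integral_cong) (simp add: indicator_def)
  also have "\<dots> = ennreal (\<integral>\<omega>\<in>A. f \<omega> \<partial>M)"
    by (rule nn_integral_set_bounded[OF f_meas _ AM]) (simp add: f_def)
  also have "(\<integral>\<omega>\<in>A. f \<omega> \<partial>M) = (\<integral>\<omega>\<in>A. real_cond_exp M (F s) f \<omega> \<partial>M)"
    by (rule S.real_cond_exp_intA[OF _ A])
       (rule integrable_const_bound[where B=1], simp add: f_def indicator_def, rule f_meas)
  also have "\<dots> = (\<integral>\<omega>\<in>A. h \<omega> \<partial>M)"
  proof -
    have "AE \<omega> in M. real_cond_exp M (F s) f \<omega> = h \<omega>"
      unfolding f_def h_def by (rule RV_cond_law[OF B])
    then show ?thesis unfolding set_lebesgue_integral_def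
      by (intro integral_cong_AE)
         (auto intro!: borel_measurable_times borel_measurable_indicator AM h_meas borel_measurable_cond_exp2)
  qed
  also have "ennreal \<dots> = (\<integral>\<^sup>+\<omega>. ennreal (indicator A \<omega> * h \<omega>) \<partial>M)"
    by (rule nn_integral_set_bounded[OF h_meas h_bounds AM, symmetric])
  also have "\<dots> = (\<integral>\<^sup>+\<omega>. indicator A \<omega> * emeasure (ncgamma \<delta> (Th s \<omega>) \<theta>) B \<partial>M)"
  proof (intro nn_integral_cong)
    fix \<omega> assume "\<omega> \<in> space M"
    then interpret N: prob_space "ncgamma \<delta> (Th s \<omega>) \<theta>" by (rule prob_space_ncgamma_Th)
    show "ennreal (indicator A \<omega> * h \<omega>) = indicator A \<omega> * emeasure (ncgamma \<delta> (Th s \<omega>) \<theta>) B"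
      unfolding h_def by (simp add: N.emeasure_eq_measure indicator_def)
  qed
  finally show ?thesis .
qed

definition mixture_density :: "'a set \<Rightarrow> int \<Rightarrow> real \<Rightarrow> ennreal" where
  "mixture_density A s x = (\<integral>\<^sup>+\<omega>. indicator A \<omega> * ennreal (ncgamma_density \<delta> (Th s \<omega>) \<theta> x) \<partial>M)"

lemma mixture_density_measurable:
  assumes A[measurable]: "A \<in> sets M"
  shows "mixture_density A s \<in> borel_measurable lborel"
proof -
  have [measurable]: "(\<lambda>(\<omega>, x). ennreal (ncgamma_density \<delta> (Th s \<omega>) \<theta> x)) \<in> borel_measurable (M \<Otimes>\<^sub>M lborel)"
    by (rule ncgamma_density_measurable_comp) measurable
  have "(\<lambda>(x, \<omega>). indicator A \<omega> * ennreal (ncgamma_density \<delta> (Th s \<omega>) \<theta> x)) \<in> borel_measurable (lborel \<Otimes>\<^sub>M M)"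
    by measurable
  then show ?thesis unfolding mixture_density_def[abs_def] by (rule borel_measurable_nn_integral)
qed

lemma nn_integral_mixture:
  assumes A[measurable]: "A \<in> sets M" and h[measurable]: "h \<in> borel_measurable borel"
  shows "(\<integral>\<^sup>+\<omega>. indicator A \<omega> * (\<integral>\<^sup>+x. h x \<partial>ncgamma \<delta> (Th s \<omega>) \<theta>) \<partial>M)
       = (\<integral>\<^sup>+x. mixture_density A s x * h x \<partial>lborel)"
proof -
  interpret P: pair_sigma_finite M lborel
    by (simp add: pair_sigma_finite_def sigma_finite_measure_axioms lborel.sigma_finite_measure_axioms)
  have [measurable]: "(\<lambda>(\<omega>, x). ennreal (ncgamma_density \<delta> (Th s \<omega>) \<theta> x)) \<in> borel_measurable (M \<Otimes>\<^sub>M lborel)"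
    by (rule ncgamma_density_measurable_comp) measurable
  have "(\<integral>\<^sup>+\<omega>. indicator A \<omega> * (\<integral>\<^sup>+x. h x \<partial>ncgamma \<delta> (Th s \<omega>) \<theta>) \<partial>M)
      = (\<integral>\<^sup>+\<omega>. (\<integral>\<^sup>+x. indicator A \<omega> * (ennreal (ncgamma_density \<delta> (Th s \<omega>) \<theta> x) * h x) \<partial>lborel) \<partial>M)"
    unfolding nn_integral_ncgamma[OF h] by (intro nn_integral_cong nn_integral_cmult[symmetric]) measurable
  also have "\<dots> = (\<integral>\<^sup>+x. (\<integral>\<^sup>+\<omega>. indicator A \<omega> * (ennreal (ncgamma_density \<delta> (Th s \<omega>) \<theta> x) * h x) \<partial>M) \<partial>lborel)"
    by (rule P.Fubini'[symmetric]) measurable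
  also have "\<dots> = (\<integral>\<^sup>+x. mixture_density A s x * h x \<partial>lborel)"
    unfolding mixture_density_def
    by (intro nn_integral_cong) (subst nn_integral_multc[symmetric], measurable, simp add: mult.assoc)
  finally show ?thesis .
qed

lemma restricted_law_RV:
  assumes A: "A \<in> sets (F s)"
  shows "distr (density M (indicator A)) lborel (RV (s+1)) = density lborel (mixture_density A s)"
proof (rule measure_eqI)
  have AM[measurable]: "A \<in> sets M" using A sets_F_sub by blast
  show "sets (distr (density M (indicator A)) lborel (RV (s+1))) = sets (density lborel (mixture_density A s))"
    by simp
  fix B assume "B \<in> sets (distr (density M (indicator A)) lborel (RV (s+1)))"
  then have B[measurable]: "B \<in> sets borel" by simp
  have B_ncg: "B \<in> sets (ncgamma \<delta> \<Theta> \<theta>)" for \<Theta> using B unfolding ncgamma_def by simp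
  have "emeasure (distr (density M (indicator A)) lborel (RV (s+1))) B
      = (\<integral>\<^sup>+\<omega>. indicator A \<omega> * indicator B (RV (s+1) \<omega>) \<partial>M)"
    by (simp flip: nn_integral_indicator add: nn_integral_distr nn_integral_density)
  also have "\<dots> = (\<integral>\<^sup>+\<omega>. indicator A \<omega> * (\<integral>\<^sup>+x. indicator B x \<partial>ncgamma \<delta> (Th s \<omega>) \<theta>) \<partial>M)"
    unfolding cond_law_ind[OF A B] by (simp add: B_ncg)
  also have "\<dots> = (\<integral>\<^sup>+x. mixture_density A s x * indicator B x \<partial>lborel)"
    by (rule nn_integral_mixture) measurable
  also have "\<dots> = emeasure (density lborel (mixture_density A s)) B"
    using mixture_density_measurable[OF AM] by (simp add: emeasure_density nn_integral_set_ennreal)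
  finally show "emeasure (distr (density M (indicator A)) lborel (RV (s+1))) B
      = emeasure (density lborel (mixture_density A s)) B" .
qed

lemma cond_law_nn_integral:
  assumes A: "A \<in> sets (F s)" and g[measurable]: "g \<in> borel_measurable borel"
  shows "(\<integral>\<^sup>+\<omega>. indicator A \<omega> * g (RV (s+1) \<omega>) \<partial>M)
       = (\<integral>\<^sup>+\<omega>. indicator A \<omega> * (\<integral>\<^sup>+x. g x \<partial>ncgamma \<delta> (Th s \<omega>) \<theta>) \<partial>M)"
proof -
  have AM[measurable]: "A \<in> sets M" using A sets_F_sub by blast
  have "(\<integral>\<^sup>+\<omega>. indicator A \<omega> * g (RV (s+1) \<omega>) \<partial>M) = (\<integral>\<^sup>+x. g x \<partial>distr (density M (indicator A)) lborel (RV (s+1)))"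
    by (subst nn_integral_distr) (simp_all add: nn_integral_density)
  also have "\<dots> = (\<integral>\<^sup>+x. mixture_density A s x * g x \<partial>lborel)"
    unfolding restricted_law_RV[OF A] using mixture_density_measurable[OF AM] by (simp add: nn_integral_density)
  also have "\<dots> = (\<integral>\<^sup>+\<omega>. indicator A \<omega> * (\<integral>\<^sup>+x. g x \<partial>ncgamma \<delta> (Th s \<omega>) \<theta>) \<partial>M)"
    by (rule nn_integral_mixture[symmetric]) simp_all
  finally show ?thesis .
qed

lemma cond_exp_ncgamma:
  assumes g[measurable]: "g \<in> borel_measurable borel"
  shows "AE \<omega> in M. (\<integral>\<^sup>+x. g x \<partial>ncgamma \<delta> (Th s \<omega>) \<theta>) = nn_cond_exp M (F s) (\<lambda>\<omega>. g (RV (s+1) \<omega>)) \<omega>"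
proof -
  interpret S: sigma_finite_subalgebra M "F s" by (rule sfs_F)
  show ?thesis
  proof (rule S.nn_cond_exp_charact)
    fix A assume A: "A \<in> sets (F s)"
    show "(\<integral>\<^sup>+\<omega>\<in>A. g (RV (s+1) \<omega>) \<partial>M) = (\<integral>\<^sup>+\<omega>\<in>A. (\<integral>\<^sup>+x. g x \<partial>ncgamma \<delta> (Th s \<omega>) \<theta>) \<partial>M)"
      using cond_law_nn_integral[OF A g] by (simp add: mult.commute)
  next
    show "(\<lambda>\<omega>. g (RV (s+1) \<omega>)) \<in> borel_measurable M" by measurable
    show "(\<lambda>\<omega>. \<integral>\<^sup>+x. g x \<partial>ncgamma \<delta> (Th s \<omega>) \<theta>) \<in> borel_measurable (F s)"
      by (rule ncgamma_integral_measurable[OF g])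
  qed
qed

lemma cond_law_weighted:
  assumes g[measurable]: "g \<in> borel_measurable borel" and G: "G \<in> borel_measurable (F s)"
  shows "(\<integral>\<^sup>+\<omega>. G \<omega> * g (RV (s+1) \<omega>) \<partial>M) = (\<integral>\<^sup>+\<omega>. G \<omega> * (\<integral>\<^sup>+x. g x \<partial>ncgamma \<delta> (Th s \<omega>) \<theta>) \<partial>M)"
proof -
  interpret S: sigma_finite_subalgebra M "F s" by (rule sfs_F)
  have "(\<integral>\<^sup>+\<omega>. G \<omega> * g (RV (s+1) \<omega>) \<partial>M) = (\<integral>\<^sup>+\<omega>. G \<omega> * nn_cond_exp M (F s) (\<lambda>\<omega>. g (RV (s+1) \<omega>)) \<omega> \<partial>M)"
    by (rule S.nn_cond_exp_intg[symmetric, OF G]) measurable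
  also have "\<dots> = (\<integral>\<^sup>+\<omega>. G \<omega> * (\<integral>\<^sup>+x. g x \<partial>ncgamma \<delta> (Th s \<omega>) \<theta>) \<partial>M)"
    using cond_exp_ncgamma[OF g, of s] by (intro nn_integral_cong_AE) auto
  finally show ?thesis .
qed

end

context lharg_model begin

lemma joint_law_eps_indep:
  assumes Z: "Z \<in> measurable (Fp s) N"
  shows "distr M lborel (eps (s+1)) \<Otimes>\<^sub>M distr M N Z = distr M (lborel \<Otimes>\<^sub>M N) (\<lambda>x. (eps (s+1) x, Z x))"
proof -
  have ZM[measurable]: "Z \<in> measurable M N"
    by (rule measurable_from_subalg[OF _ Z]) (simp add: subalgebra_def sets_Fp_sub)
  have indep: "prob (X \<inter> Y) = prob X * prob Y" if "X \<in> gen_sets M (eps (s + 1))" "Y \<in> sets (Fp s)" for X Y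
  proof -
    have "\<forall>a\<in>gen_sets M (eps (s + 1)). \<forall>b\<in>sets (Fp s). prob (a \<inter> b) = prob a * prob b"
      using eps_indep_past[of s] unfolding indep_sets2_eq by (elim conjE)
    then show ?thesis using that by simp
  qed
  interpret D1: prob_space "distr M lborel (eps (s+1))" by (rule prob_space_distr) simp
  interpret D2: prob_space "distr M N Z" by (rule prob_space_distr) simp
  show ?thesis
  proof (rule pair_measure_eqI)
    show "sigma_finite_measure (distr M lborel (eps (s+1)))" by (rule D1.sigma_finite_measure_axioms)
    show "sigma_finite_measure (distr M N Z)" by (rule D2.sigma_finite_measure_axioms)
    show "sets (distr M lborel (eps (s+1)) \<Otimes>\<^sub>M distr M N Z) = sets (distr M (lborel \<Otimes>\<^sub>M N) (\<lambda>x. (eps (s+1) x, Z x)))"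
      unfolding sets_distr[of M "lborel \<Otimes>\<^sub>M N"] by (rule sets_pair_measure_cong) simp_all
    fix A B assume A: "A \<in> sets (distr M lborel (eps (s+1)))" and B: "B \<in> sets (distr M N Z)"
    then have A': "A \<in> sets borel" and B': "B \<in> sets N" by simp_all
    show "emeasure (distr M lborel (eps (s+1))) A * emeasure (distr M N Z) B
        = emeasure (distr M (lborel \<Otimes>\<^sub>M N) (\<lambda>x. (eps (s+1) x, Z x))) (A \<times> B)"
    proof -
      have X: "eps (s+1) -` A \<inter> space M \<in> gen_sets M (eps (s + 1))" using A' unfolding gen_sets_def by (intro CollectI exI[of _ A]) simp
      have Y: "Z -` B \<inter> space M \<in> sets (Fp s)" using measurable_sets[OF Z B'] by simp
      have AB: "A \<times> B \<in> sets (lborel \<Otimes>\<^sub>M N)" using A' B' by simp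
      have pre: "(\<lambda>x. (eps (s+1) x, Z x)) -` (A \<times> B) \<inter> space M = (eps (s+1) -` A \<inter> space M) \<inter> (Z -` B \<inter> space M)"
        by auto
      have "emeasure (distr M (lborel \<Otimes>\<^sub>M N) (\<lambda>x. (eps (s+1) x, Z x))) (A \<times> B)
          = emeasure M ((eps (s+1) -` A \<inter> space M) \<inter> (Z -` B \<inter> space M))"
        by (subst emeasure_distr[OF _ AB]) (simp_all only: pre, measurable)
      also have "\<dots> = ennreal (prob (eps (s+1) -` A \<inter> space M) * prob (Z -` B \<inter> space M))"
        by (simp only: emeasure_eq_measure indep[OF X Y])
      also have "\<dots> = emeasure (distr M lborel (eps (s+1))) A * emeasure (distr M N Z) B"
        using A' B' by (simp add: emeasure_distr emeasure_eq_measure ennreal_mult)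
      finally show ?thesis ..
    qed
  qed
qed

lemma nn_integral_eps_indep:
  fixes Z :: "'a \<Rightarrow> 'b" and h :: "'b \<times> real \<Rightarrow> ennreal"
  assumes Z: "Z \<in> measurable (Fp s) N" and h[measurable]: "h \<in> borel_measurable (N \<Otimes>\<^sub>M lborel)"
  shows "(\<integral>\<^sup>+\<omega>. h (Z \<omega>, eps (s+1) \<omega>) \<partial>M)
       = (\<integral>\<^sup>+\<omega>. (\<integral>\<^sup>+e. ennreal (std_normal_density e) * h (Z \<omega>, e) \<partial>lborel) \<partial>M)"
proof -
  have ZM[measurable]: "Z \<in> measurable M N"
    by (rule measurable_from_subalg[OF _ Z]) (simp add: subalgebra_def sets_Fp_sub)
  interpret D1: prob_space "distr M lborel (eps (s+1))" by (rule prob_space_distr) simp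
  interpret D2: prob_space "distr M N Z" by (rule prob_space_distr) simp
  note product_law = joint_law_eps_indep[OF Z]
  have dens: "distr M lborel (eps (s+1)) = density lborel (\<lambda>x. ennreal (std_normal_density x))"
    using eps_normal[of "s+1"] unfolding distributed_def by simp
  interpret P: pair_sigma_finite "distr M lborel (eps (s+1))" "distr M N Z"
    by (simp add: pair_sigma_finite_def D1.sigma_finite_measure_axioms D2.sigma_finite_measure_axioms)
  define h' where "h' p = h (snd p, fst p)" for p
  have h'_meas: "h' \<in> borel_measurable (lborel \<Otimes>\<^sub>M N)" unfolding h'_def by measurable
  have h'_meas_prod: "h' \<in> borel_measurable (distr M lborel (eps (s+1)) \<Otimes>\<^sub>M distr M N Z)"
  proof -
    have "sets (distr M lborel (eps (s+1)) \<Otimes>\<^sub>M distr M N Z) = sets (lborel \<Otimes>\<^sub>M N)"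
      by (rule sets_pair_measure_cong) simp_all
    then have "measurable (distr M lborel (eps (s+1)) \<Otimes>\<^sub>M distr M N Z) borel = measurable (lborel \<Otimes>\<^sub>M N) borel"
      by (rule measurable_cong_sets) simp
    then show ?thesis using h'_meas by (rule ssubst)
  qed
  have pair_meas: "(\<lambda>x. (eps (s+1) x, Z x)) \<in> measurable M (lborel \<Otimes>\<^sub>M N)" by measurable
  have inner_meas: "(\<lambda>z. \<integral>\<^sup>+e. ennreal (std_normal_density e) * h (z, e) \<partial>lborel) \<in> borel_measurable N"
    by (rule lborel.borel_measurable_nn_integral) measurable
  have "(\<integral>\<^sup>+\<omega>. h (Z \<omega>, eps (s+1) \<omega>) \<partial>M) = (\<integral>\<^sup>+\<omega>. h' (eps (s+1) \<omega>, Z \<omega>) \<partial>M)"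
    unfolding h'_def by simp
  also have "\<dots> = (\<integral>\<^sup>+p. h' p \<partial>distr M (lborel \<Otimes>\<^sub>M N) (\<lambda>x. (eps (s+1) x, Z x)))"
    by (rule nn_integral_distr[symmetric, OF pair_meas]) (simp add: h'_meas)
  also have "\<dots> = (\<integral>\<^sup>+p. h' p \<partial>(distr M lborel (eps (s+1)) \<Otimes>\<^sub>M distr M N Z))"
    unfolding product_law ..
  also have "\<dots> = (\<integral>\<^sup>+z. (\<integral>\<^sup>+e. h' (e, z) \<partial>distr M lborel (eps (s+1))) \<partial>distr M N Z)"
    by (rule P.nn_integral_snd[symmetric, OF h'_meas_prod])
  also have "\<dots> = (\<integral>\<^sup>+z. (\<integral>\<^sup>+e. ennreal (std_normal_density e) * h (z, e) \<partial>lborel) \<partial>distr M N Z)"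
    unfolding dens h'_def by (intro nn_integral_cong) (simp add: nn_integral_density)
  also have "\<dots> = (\<integral>\<^sup>+\<omega>. (\<integral>\<^sup>+e. ennreal (std_normal_density e) * h (Z \<omega>, e) \<partial>lborel) \<partial>M)"
    by (rule nn_integral_distr[OF ZM]) (simp add: inner_meas)
  finally show ?thesis .
qed

end

section \<open>One period of the backward recursion\<close>

lemma ennreal_exp_add_indicator:
  "ennreal (exp (h + x)) * indicator A \<omega> = (indicator A \<omega> * ennreal (exp h)) * ennreal (exp x)"
  by (simp add: exp_add ennreal_mult mult_ac)

context lharg_model begin

text \<open>Integrating out eps_{s+1} against an F_s-measurable weight G: since eps_{s+1} is
  standard normal and independent of (G, RV_{s+1}), the Gaussian moment applies with
  RV_{s+1} held fixed.\<close>

lemma integrate_out_eps: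
  fixes a b c :: real and G :: "'a \<Rightarrow> ennreal"
  assumes G[measurable]: "G \<in> borel_measurable (F s)" and c: "c < 1/2"
  shows "(\<integral>\<^sup>+\<omega>. G \<omega> * ennreal (exp (a * RV (s+1) \<omega> + c * ell (s+1) \<omega> + b * sqrt (RV (s+1) \<omega>) * eps (s+1) \<omega>)) \<partial>M)
       = (\<integral>\<^sup>+\<omega>. G \<omega> * ennreal (exp (- 1/2 * ln (1 - 2*c) + gauss_coef \<gamma> a b c * RV (s+1) \<omega>)) \<partial>M)"
proof -
  define h :: "(ennreal \<times> real) \<times> real \<Rightarrow> ennreal"
    where "h p = fst (fst p) * ennreal (exp (a * snd (fst p) + c * (snd p - \<gamma> * sqrt (snd (fst p)))\<^sup>2
                                              + b * sqrt (snd (fst p)) * snd p))" for p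
  define Z where "Z \<omega> = (G \<omega>, RV (s+1) \<omega>)" for \<omega>
  have Z_meas: "Z \<in> measurable (Fp s) (borel \<Otimes>\<^sub>M borel)"
    unfolding Z_def using meas_F_Fp[OF G] RV_Fp[of s] by measurable
  have h_meas: "h \<in> borel_measurable ((borel \<Otimes>\<^sub>M borel) \<Otimes>\<^sub>M lborel)"
    unfolding h_def by measurable
  have "(\<integral>\<^sup>+\<omega>. G \<omega> * ennreal (exp (a * RV (s+1) \<omega> + c * ell (s+1) \<omega> + b * sqrt (RV (s+1) \<omega>) * eps (s+1) \<omega>)) \<partial>M)
      = (\<integral>\<^sup>+\<omega>. h (Z \<omega>, eps (s+1) \<omega>) \<partial>M)"
    unfolding h_def Z_def lev_def by simp
  also have "\<dots> = (\<integral>\<^sup>+\<omega>. (\<integral>\<^sup>+e. ennreal (std_normal_density e) * h (Z \<omega>, e) \<partial>lborel) \<partial>M)"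
    by (rule nn_integral_eps_indep[OF Z_meas h_meas])
  also have "\<dots> = (\<integral>\<^sup>+\<omega>. G \<omega> * ennreal (exp (- 1/2 * ln (1 - 2*c) + gauss_coef \<gamma> a b c * RV (s+1) \<omega>)) \<partial>M)"
  proof (intro nn_integral_cong)
    fix \<omega> assume \<omega>: "\<omega> \<in> space M"
    have x: "RV (s+1) \<omega> \<ge> 0" using RV_pos[OF \<omega>, of "s+1"] by simp
    have "(\<integral>\<^sup>+e. ennreal (std_normal_density e) * h (Z \<omega>, e) \<partial>lborel)
        = G \<omega> * (\<integral>\<^sup>+e. ennreal (std_normal_density e) * ennreal (exp (a * RV (s+1) \<omega>
                 + c * (e - \<gamma> * sqrt (RV (s+1) \<omega>))\<^sup>2 + b * sqrt (RV (s+1) \<omega>) * e)) \<partial>lborel)"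
      unfolding h_def Z_def by (subst nn_integral_cmult[symmetric]) (measurable, simp add: mult_ac)
    then show "(\<integral>\<^sup>+e. ennreal (std_normal_density e) * h (Z \<omega>, e) \<partial>lborel)
        = G \<omega> * ennreal (exp (- 1/2 * ln (1 - 2*c) + gauss_coef \<gamma> a b c * RV (s+1) \<omega>))"
      by (simp only: gauss_leverage_moment[OF c x])
  qed
  finally show ?thesis .
qed

text \<open>Integrating out RV_{s+1}: by its conditional law, exp(X RV_{s+1}) averages to the
  noncentral gamma MGF exp(-\<delta> w(X,\<theta>) + Theta_s v(X,\<theta>)).\<close>

lemma integrate_out_RV:
  fixes X \<kappa> :: real and G :: "'a \<Rightarrow> ennreal"
  assumes G[measurable]: "G \<in> borel_measurable (F s)" and X: "\<theta> * X < 1"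
  shows "(\<integral>\<^sup>+\<omega>. G \<omega> * ennreal (exp (\<kappa> + X * RV (s+1) \<omega>)) \<partial>M)
       = (\<integral>\<^sup>+\<omega>. G \<omega> * ennreal (exp (\<kappa> - \<delta> * wfun X \<theta> + Th s \<omega> * vfun X \<theta>)) \<partial>M)"
proof -
  have "(\<integral>\<^sup>+\<omega>. G \<omega> * ennreal (exp (\<kappa> + X * RV (s+1) \<omega>)) \<partial>M)
      = (\<integral>\<^sup>+\<omega>. (G \<omega> * ennreal (exp \<kappa>)) * ennreal (exp (X * RV (s+1) \<omega>)) \<partial>M)"
    by (simp add: exp_add ennreal_mult mult.assoc)
  also have "\<dots> = (\<integral>\<^sup>+\<omega>. (G \<omega> * ennreal (exp \<kappa>)) * (\<integral>\<^sup>+x. ennreal (exp (X * x)) \<partial>ncgamma \<delta> (Th s \<omega>) \<theta>) \<partial>M)"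
    by (rule cond_law_weighted) measurable
  also have "\<dots> = (\<integral>\<^sup>+\<omega>. G \<omega> * ennreal (exp (\<kappa> - \<delta> * wfun X \<theta> + Th s \<omega> * vfun X \<theta>)) \<partial>M)"
  proof (intro nn_integral_cong)
    fix \<omega> assume \<omega>: "\<omega> \<in> space M"
    have "(\<integral>\<^sup>+x. ennreal (exp (X * x)) \<partial>ncgamma \<delta> (Th s \<omega>) \<theta>)
        = ennreal (exp (- \<delta> * wfun X \<theta> + Th s \<omega> * vfun X \<theta>))"
      using ncgamma_mgf[of \<delta> \<theta> "Th s \<omega>" X] params Th_nn[OF \<omega>] X by simp
    moreover have "\<kappa> - \<delta> * wfun X \<theta> + Th s \<omega> * vfun X \<theta> = \<kappa> + (- \<delta> * wfun X \<theta> + Th s \<omega> * vfun X \<theta>)"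
      by simp
    ultimately show "G \<omega> * ennreal (exp \<kappa>) * (\<integral>\<^sup>+x. ennreal (exp (X * x)) \<partial>ncgamma \<delta> (Th s \<omega>) \<theta>)
        = G \<omega> * ennreal (exp (\<kappa> - \<delta> * wfun X \<theta> + Th s \<omega> * vfun X \<theta>))"
      by (simp only: exp_add) (simp add: ennreal_mult mult.assoc)
  qed
  finally show ?thesis .
qed

lemma one_period_weighted:
  fixes a b c :: real and G :: "'a \<Rightarrow> ennreal"
  assumes G: "G \<in> borel_measurable (F s)" and c: "c < 1/2"
    and X: "\<theta> * gauss_coef \<gamma> a b c < 1"
  shows "(\<integral>\<^sup>+\<omega>. G \<omega> * ennreal (exp (a * RV (s+1) \<omega> + c * ell (s+1) \<omega> + b * sqrt (RV (s+1) \<omega>) * eps (s+1) \<omega>)) \<partial>M)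
       = (\<integral>\<^sup>+\<omega>. G \<omega> * ennreal (exp (- 1/2 * ln (1 - 2*c) - \<delta> * wfun (gauss_coef \<gamma> a b c) \<theta>
                                       + Th s \<omega> * vfun (gauss_coef \<gamma> a b c) \<theta>)) \<partial>M)"
  unfolding integrate_out_eps[OF G c] by (rule integrate_out_RV[OF G X])

lemma one_period_cond_exp:
  fixes a b c :: real and H :: "'a \<Rightarrow> real"
  assumes H[measurable]: "H \<in> borel_measurable (F s)" and c: "c < 1/2"
    and X: "\<theta> * gauss_coef \<gamma> a b c < 1"
  shows "AE \<omega> in M. nn_cond_exp M (F s)
            (\<lambda>\<omega>. ennreal (exp (H \<omega> + (a * RV (s+1) \<omega> + c * ell (s+1) \<omega> + b * sqrt (RV (s+1) \<omega>) * eps (s+1) \<omega>)))) \<omega>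
         = ennreal (exp (H \<omega> + (- 1/2 * ln (1 - 2*c) - \<delta> * wfun (gauss_coef \<gamma> a b c) \<theta>
                                  + Th s \<omega> * vfun (gauss_coef \<gamma> a b c) \<theta>)))"
proof -
  interpret S: sigma_finite_subalgebra M "F s" by (rule sfs_F)
  have HM[measurable]: "H \<in> borel_measurable M" by (rule meas_F_M[OF H])
  have [measurable]: "Th s \<in> borel_measurable (F s)" by (rule Th_F)
  have "AE \<omega> in M. ennreal (exp (H \<omega> + (- 1/2 * ln (1 - 2*c) - \<delta> * wfun (gauss_coef \<gamma> a b c) \<theta>
                                            + Th s \<omega> * vfun (gauss_coef \<gamma> a b c) \<theta>)))
      = nn_cond_exp M (F s) (\<lambda>\<omega>. ennreal (exp (H \<omega> + (a * RV (s+1) \<omega> + c * ell (s+1) \<omega>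
                                                     + b * sqrt (RV (s+1) \<omega>) * eps (s+1) \<omega>)))) \<omega>"
  proof (rule S.nn_cond_exp_charact)
    fix A assume A[measurable]: "A \<in> sets (F s)"
    have "(\<lambda>\<omega>. indicator A \<omega> * ennreal (exp (H \<omega>))) \<in> borel_measurable (F s)" by measurable
    from one_period_weighted[OF this c X]
    show "(\<integral>\<^sup>+\<omega>\<in>A. ennreal (exp (H \<omega> + (a * RV (s+1) \<omega> + c * ell (s+1) \<omega> + b * sqrt (RV (s+1) \<omega>) * eps (s+1) \<omega>))) \<partial>M)
        = (\<integral>\<^sup>+\<omega>\<in>A. ennreal (exp (H \<omega> + (- 1/2 * ln (1 - 2*c) - \<delta> * wfun (gauss_coef \<gamma> a b c) \<theta>
                                                + Th s \<omega> * vfun (gauss_coef \<gamma> a b c) \<theta>))) \<partial>M)"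
      by (simp only: ennreal_exp_add_indicator)
  next
    show "(\<lambda>\<omega>. ennreal (exp (H \<omega> + (a * RV (s+1) \<omega> + c * ell (s+1) \<omega> + b * sqrt (RV (s+1) \<omega>) * eps (s+1) \<omega>))))
        \<in> borel_measurable M"
      unfolding lev_def by measurable
  qed measurable
  then show ?thesis by (auto elim: AE_mp)
qed

text \<open>The normalising denominator of the SDF is the case c = 0, H = -\<nu>2 r of the one-period
  formula; its Gaussian coefficient is Ystar.\<close>

lemma Ystar_gauss_coef: "Ystar lam \<nu>1 \<nu>2 = gauss_coef \<gamma> (- \<nu>1 - \<nu>2 * lam) (- \<nu>2) 0"
  unfolding Ystar_def gauss_coef_def by (simp add: power2_eq_square)

lemma sdf_denominator:
  assumes Y: "\<theta> * Ystar lam \<nu>1 \<nu>2 < 1"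
  shows "AE \<omega> in M. real_cond_exp M (F s) (\<lambda>\<omega>'. exp (- \<nu>1 * RV (s + 1) \<omega>' - \<nu>2 * logret r lam eps RV (s + 1) \<omega>')) \<omega>
           = exp (- \<nu>2 * r - \<delta> * wfun (Ystar lam \<nu>1 \<nu>2) \<theta> + Th s \<omega> * vfun (Ystar lam \<nu>1 \<nu>2) \<theta>)"
proof -
  interpret S: sigma_finite_subalgebra M "F s" by (rule sfs_F)
  have Y': "\<theta> * gauss_coef \<gamma> (- \<nu>1 - \<nu>2 * lam) (- \<nu>2) 0 < 1"
    using Y unfolding Ystar_gauss_coef[of lam \<nu>1 \<nu>2] .
  have exponent: "- \<nu>1 * RV (s + 1) \<omega> - \<nu>2 * logret r lam eps RV (s + 1) \<omega>
      = - \<nu>2 * r + ((- \<nu>1 - \<nu>2 * lam) * RV (s+1) \<omega> + 0 * ell (s+1) \<omega> + (- \<nu>2) * sqrt (RV (s+1) \<omega>) * eps (s+1) \<omega>)"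
    for \<omega> unfolding logret_def by (simp add: algebra_simps)
  have pos_part: "AE \<omega> in M. nn_cond_exp M (F s) (\<lambda>\<omega>'. ennreal (exp (- \<nu>1 * RV (s + 1) \<omega>' - \<nu>2 * logret r lam eps RV (s + 1) \<omega>'))) \<omega>
      = ennreal (exp (- \<nu>2 * r - \<delta> * wfun (Ystar lam \<nu>1 \<nu>2) \<theta> + Th s \<omega> * vfun (Ystar lam \<nu>1 \<nu>2) \<theta>))"
  proof -
    have "AE \<omega> in M. nn_cond_exp M (F s) (\<lambda>\<omega>. ennreal (exp (- \<nu>2 * r + ((- \<nu>1 - \<nu>2 * lam) * RV (s+1) \<omega>
              + 0 * ell (s+1) \<omega> + (- \<nu>2) * sqrt (RV (s+1) \<omega>) * eps (s+1) \<omega>)))) \<omega>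
        = ennreal (exp (- \<nu>2 * r + (- 1/2 * ln (1 - 2*0) - \<delta> * wfun (gauss_coef \<gamma> (- \<nu>1 - \<nu>2 * lam) (- \<nu>2) 0) \<theta>
              + Th s \<omega> * vfun (gauss_coef \<gamma> (- \<nu>1 - \<nu>2 * lam) (- \<nu>2) 0) \<theta>)))"
      by (rule one_period_cond_exp[OF _ _ Y']) simp_all
    then show ?thesis
      unfolding exponent[symmetric] Ystar_gauss_coef[of lam \<nu>1 \<nu>2, symmetric] by (simp add: algebra_simps)
  qed
  have neg_part: "AE \<omega> in M. nn_cond_exp M (F s) (\<lambda>\<omega>'. ennreal (- exp (- \<nu>1 * RV (s + 1) \<omega>' - \<nu>2 * logret r lam eps RV (s + 1) \<omega>'))) \<omega> = 0"
  proof -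
    have "(\<lambda>\<omega>'. ennreal (- exp (- \<nu>1 * RV (s + 1) \<omega>' - \<nu>2 * logret r lam eps RV (s + 1) \<omega>'))) = (\<lambda>_. 0)"
      by (intro ext) (simp add: ennreal_neg)
    moreover have "AE \<omega> in M. (\<lambda>_. 0::ennreal) \<omega> = nn_cond_exp M (F s) (\<lambda>_. 0) \<omega>"
      by (rule S.nn_cond_exp_F_meas) simp
    ultimately show ?thesis by (auto elim: AE_mp)
  qed
  show ?thesis using pos_part neg_part unfolding real_cond_exp_def by (auto elim!: AE_mp)
qed

end

section \<open>The coefficient recursion\<close>

text \<open>Shifting the lag window by one period: the lag-1 term splits off and the remaining
  coefficients move down by one index, which is how coefs shifts B and C.\<close>

lemma sum_split_shift:
  fixes f :: "nat \<Rightarrow> real" and g :: "int \<Rightarrow> real"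
  assumes p: "p \<ge> 1"
  shows "(\<Sum>i=1..p. f i * g (t + 1 + 1 - int i))
       = f 1 * g (t+1) + (\<Sum>i=1..p. (if i \<le> p - 1 then f (i+1) else 0) * g (t + 1 - int i))"
proof -
  obtain p' where pp: "p = Suc p'" using p by (cases p) auto
  have "(\<Sum>i=1..p. f i * g (t + 1 + 1 - int i)) = f 1 * g (t+1) + (\<Sum>i=Suc 1..Suc p'. f i * g (t + 1 + 1 - int i))"
    unfolding pp by (subst sum.atLeast_Suc_atMost) (simp_all add: add.commute)
  also have "(\<Sum>i=Suc 1..Suc p'. f i * g (t + 1 + 1 - int i)) = (\<Sum>i=1..p'. f (Suc i) * g (t + 1 + 1 - int (Suc i)))"
    by (rule sum.shift_bounds_cl_Suc_ivl)
  also have "\<dots> = (\<Sum>i=1..p'. (if i \<le> p - 1 then f (i+1) else 0) * g (t + 1 - int i))"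
    unfolding pp by (intro sum.cong) (auto simp: algebra_simps)
  also have "\<dots> = (\<Sum>i=1..p. (if i \<le> p - 1 then f (i+1) else 0) * g (t + 1 - int i))"
  proof -
    have "(\<Sum>i=1..p. (if i \<le> p - 1 then f (i+1) else 0) * g (t + 1 - int i))
        = (\<Sum>i=1..p'. (if i \<le> p - 1 then f (i+1) else 0) * g (t + 1 - int i)) + (if p \<le> p - 1 then f (p+1) else 0) * g (t + 1 - int p)"
      unfolding pp by (subst sum.cl_ivl_Suc) simp
    then show ?thesis unfolding pp by simp
  qed
  finally show ?thesis .
qed

text \<open>With a = (z - \<nu>2) lam - \<nu>1 + B_1, b = z - \<nu>2 and c = C_1, the Gaussian coefficient of
  the one-period formula is exactly Xstar.\<close>

lemma gauss_coef_Xstar: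
  assumes "1 - 2*C \<noteq> 0"
  shows "gauss_coef \<gamma> ((z - \<nu>2) * lam - \<nu>1 + B1) (z - \<nu>2) C = Xstar lam \<gamma> \<nu>1 \<nu>2 z B1 C"
proof -
  have "C * \<gamma>\<^sup>2 + ((z - \<nu>2) - 2*C*\<gamma>)\<^sup>2 / (2*(1 - 2*C))
      = (1/2 * (z - \<nu>2)\<^sup>2 + \<gamma>\<^sup>2 * C - 2 * C * \<gamma> * (z - \<nu>2)) / (1 - 2 * C)"
    using assms by (simp add: field_simps power2_eq_square)
  then show ?thesis unfolding gauss_coef_def Xstar_def by simp
qed

locale lharg_pricing = lharg_model +
  fixes r lam \<nu>1 \<nu>2 z :: real
  assumes Ycond: "\<theta> * Ystar lam \<nu>1 \<nu>2 < 1"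
    and pq: "p \<ge> 1" "q \<ge> 1"
begin

abbreviation "Y \<equiv> Ystar lam \<nu>1 \<nu>2"
abbreviation "y u \<equiv> logret r lam eps RV u"

definition sdf_explicit :: "int \<Rightarrow> 'a \<Rightarrow> real" where
  "sdf_explicit u \<omega> = exp (- \<nu>1 * RV (u+1) \<omega> - \<nu>2 * y (u+1) \<omega> + \<nu>2 * r + \<delta> * wfun Y \<theta> - Th u \<omega> * vfun Y \<theta>)"

lemma sdf_explicit_ae: "AE \<omega> in M. sdf M r lam \<nu>1 \<nu>2 eps RV u \<omega> = sdf_explicit u \<omega>"
  using sdf_denominator[OF Ycond, of u r]
proof (rule AE_mp, intro AE_I2 impI)
  fix \<omega> assume eq: "real_cond_exp M (F u) (\<lambda>\<omega>'. exp (- \<nu>1 * RV (u + 1) \<omega>' - \<nu>2 * y (u + 1) \<omega>')) \<omega>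
           = exp (- \<nu>2 * r - \<delta> * wfun Y \<theta> + Th u \<omega> * vfun Y \<theta>)"
  show "sdf M r lam \<nu>1 \<nu>2 eps RV u \<omega> = sdf_explicit u \<omega>"
    unfolding sdf_def eq sdf_explicit_def by (simp add: exp_diff[symmetric] algebra_simps)
qed

definition disc_payoff :: "nat \<Rightarrow> int \<Rightarrow> 'a \<Rightarrow> real" where
  "disc_payoff k s \<omega> = (\<Prod>u\<in>{s..<s + int k}. sdf_explicit u \<omega>) * exp (z * (\<Sum>u\<in>{s+1..s + int k}. y u \<omega>))"

definition affine_mgf :: "nat \<Rightarrow> int \<Rightarrow> 'a \<Rightarrow> real" where
  "affine_mgf k s \<omega> = (case coefs r lam \<delta> \<theta> d \<gamma> p q \<beta> \<alpha> \<nu>1 \<nu>2 z k of (A, B, C) \<Rightarrow>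
      exp (A + (\<Sum>i=1..p. B i * RV (s + 1 - int i) \<omega>) + (\<Sum>j=1..q. C j * ell (s + 1 - int j) \<omega>)))"

definition coefs_admissible :: "nat \<Rightarrow> bool" where
  "coefs_admissible k = (case coefs r lam \<delta> \<theta> d \<gamma> p q \<beta> \<alpha> \<nu>1 \<nu>2 z k of (A, B, C) \<Rightarrow>
      1 - 2 * C 1 > 0 \<and> \<theta> * Xstar lam \<gamma> \<nu>1 \<nu>2 z (B 1) (C 1) < 1)"

definition period_factor :: "int \<Rightarrow> 'a \<Rightarrow> real" where
  "period_factor s \<omega> = sdf_explicit s \<omega> * exp (z * y (s+1) \<omega>)"

lemma disc_payoff_Suc: "disc_payoff (Suc k) s \<omega> = period_factor s \<omega> * disc_payoff k (s+1) \<omega>"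
proof -
  have "{s..<s + int (Suc k)} = insert s {s+1..<(s+1) + int k}" by auto
  moreover have "{s+1..s + int (Suc k)} = insert (s+1) {(s+1)+1..(s+1) + int k}" by auto
  ultimately show ?thesis
    unfolding disc_payoff_def period_factor_def by (simp add: distrib_left exp_add mult_ac)
qed

lemma disc_payoff_measurable: "disc_payoff k s \<in> borel_measurable M"
  unfolding disc_payoff_def sdf_explicit_def logret_def by measurable

lemma affine_mgf_measurable: "affine_mgf k s \<in> borel_measurable M"
  unfolding affine_mgf_def lev_def by (cases "coefs r lam \<delta> \<theta> d \<gamma> p q \<beta> \<alpha> \<nu>1 \<nu>2 z k") simp

lemma period_factor_F: "period_factor s \<in> borel_measurable (F (s+1))"
proof -
  have [measurable]: "RV (s+1) \<in> borel_measurable (F (s+1))" "eps (s+1) \<in> borel_measurable (F (s+1))"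
    by (auto intro: RV_F eps_F)
  have [measurable]: "Th s \<in> borel_measurable (F (s+1))" by (rule meas_F_mono[OF Th_F]) simp
  show ?thesis unfolding period_factor_def sdf_explicit_def logret_def by measurable
qed

definition known_part :: "real \<Rightarrow> (nat \<Rightarrow> real) \<Rightarrow> (nat \<Rightarrow> real) \<Rightarrow> int \<Rightarrow> 'a \<Rightarrow> real" where
  "known_part A B C s \<omega> = z * r + \<delta> * wfun Y \<theta> - Th s \<omega> * vfun Y \<theta> + A
     + (\<Sum>i=1..p. (if i \<le> p - 1 then B (i+1) else 0) * RV (s + 1 - int i) \<omega>)
     + (\<Sum>j=1..q. (if j \<le> q - 1 then C (j+1) else 0) * ell (s + 1 - int j) \<omega>)"

lemma known_part_F: "known_part A B C s \<in> borel_measurable (F s)"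
  unfolding known_part_def
  by (intro borel_measurable_add borel_measurable_diff borel_measurable_sum borel_measurable_times
        borel_measurable_const Th_F RV_F ell_F) auto

lemma period_factor_affine_mgf:
  assumes cf: "coefs r lam \<delta> \<theta> d \<gamma> p q \<beta> \<alpha> \<nu>1 \<nu>2 z k = (A, B, C)"
  shows "period_factor s \<omega> * affine_mgf k (s+1) \<omega>
       = exp (known_part A B C s \<omega> + (((z - \<nu>2) * lam - \<nu>1 + B 1) * RV (s+1) \<omega> + C 1 * ell (s+1) \<omega>
                                       + (z - \<nu>2) * sqrt (RV (s+1) \<omega>) * eps (s+1) \<omega>))"
proof -
  have sB: "(\<Sum>i=1..p. B i * RV (s + 1 + 1 - int i) \<omega>)
      = B 1 * RV (s+1) \<omega> + (\<Sum>i=1..p. (if i \<le> p - 1 then B (i+1) else 0) * RV (s + 1 - int i) \<omega>)"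
    by (rule sum_split_shift[OF pq(1), where g="\<lambda>t. RV t \<omega>"])
  have sC: "(\<Sum>j=1..q. C j * ell (s + 1 + 1 - int j) \<omega>)
      = C 1 * ell (s+1) \<omega> + (\<Sum>j=1..q. (if j \<le> q - 1 then C (j+1) else 0) * ell (s + 1 - int j) \<omega>)"
    by (rule sum_split_shift[OF pq(2), where g="\<lambda>t. ell t \<omega>"])
  show ?thesis
    unfolding period_factor_def sdf_explicit_def affine_mgf_def cf prod.case sB sC known_part_def
    by (simp only: exp_add[symmetric]) (simp add: logret_def algebra_simps)
qed

lemma coefs_step:
  assumes cf: "coefs r lam \<delta> \<theta> d \<gamma> p q \<beta> \<alpha> \<nu>1 \<nu>2 z k = (A, B, C)"
  defines "X \<equiv> Xstar lam \<gamma> \<nu>1 \<nu>2 z (B 1) (C 1)"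
  shows "exp (known_part A B C s \<omega> + (- 1/2 * ln (1 - 2 * C 1) - \<delta> * wfun X \<theta> + Th s \<omega> * vfun X \<theta>))
       = affine_mgf (Suc k) s \<omega>"
proof -
  define D where "D = vfun X \<theta> - vfun Y \<theta>"
  have cS: "coefs r lam \<delta> \<theta> d \<gamma> p q \<beta> \<alpha> \<nu>1 \<nu>2 z (Suc k) =
     (A + z * r - 1/2 * ln (1 - 2 * C 1) - \<delta> * wfun X \<theta> + \<delta> * wfun Y \<theta> + d * vfun X \<theta> - d * vfun Y \<theta>,
      (\<lambda>i. if 1 \<le> i \<and> i \<le> p then (if i \<le> p - 1 then B (i + 1) else 0) + D * \<beta> i else 0),
      (\<lambda>j. if 1 \<le> j \<and> j \<le> q then (if j \<le> q - 1 then C (j + 1) else 0) + D * \<alpha> j else 0))"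
    unfolding X_def D_def by (simp only: coefs.simps cf Let_def prod.case)
  have sum_B: "(\<Sum>i=1..p. (if 1 \<le> i \<and> i \<le> p then (if i \<le> p - 1 then B (i + 1) else 0) + D * \<beta> i else 0) * RV (s + 1 - int i) \<omega>)
      = (\<Sum>i=1..p. (if i \<le> p - 1 then B (i+1) else 0) * RV (s + 1 - int i) \<omega>) + D * (\<Sum>i=1..p. \<beta> i * RV (s + 1 - int i) \<omega>)"
    by (simp add: sum.distrib sum_distrib_left distrib_right mult.assoc)
  have sum_C: "(\<Sum>j=1..q. (if 1 \<le> j \<and> j \<le> q then (if j \<le> q - 1 then C (j + 1) else 0) + D * \<alpha> j else 0) * ell (s + 1 - int j) \<omega>)
      = (\<Sum>j=1..q. (if j \<le> q - 1 then C (j+1) else 0) * ell (s + 1 - int j) \<omega>) + D * (\<Sum>j=1..q. \<alpha> j * ell (s + 1 - int j) \<omega>)"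
    by (simp add: sum.distrib sum_distrib_left distrib_right mult.assoc)
  show ?thesis
    unfolding affine_mgf_def cS prod.case sum_B sum_C
    unfolding known_part_def D_def Theta_def by (simp add: algebra_simps)
qed

text \<open>The step
  uses the tower property through F_{s+1}, pulls out the F_{s+1}-measurable first-period
  factor, applies the induction hypothesis and then the one-period formula.\<close>

lemma cond_exp_disc_payoff:
  assumes "\<forall>k'<k. coefs_admissible k'"
  shows "AE \<omega> in M. nn_cond_exp M (F s) (\<lambda>\<omega>. ennreal (disc_payoff k s \<omega>)) \<omega> = ennreal (affine_mgf k s \<omega>)"
  using assms
proof (induction k arbitrary: s)
  case 0
  interpret S: sigma_finite_subalgebra M "F s" by (rule sfs_F)
  have "AE \<omega> in M. (\<lambda>_. 1::ennreal) \<omega> = nn_cond_exp M (F s) (\<lambda>_. 1) \<omega>"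
    by (rule S.nn_cond_exp_F_meas) simp
  then show ?case unfolding disc_payoff_def affine_mgf_def by (auto elim: AE_mp)
next
  case (Suc k)
  interpret S: sigma_finite_subalgebra M "F s" by (rule sfs_F)
  interpret S1: sigma_finite_subalgebra M "F (s+1)" by (rule sfs_F)
  have IH: "AE \<omega> in M. nn_cond_exp M (F (s+1)) (\<lambda>\<omega>. ennreal (disc_payoff k (s+1) \<omega>)) \<omega>
      = ennreal (affine_mgf k (s+1) \<omega>)"
    using Suc by simp
  obtain A B C where cf: "coefs r lam \<delta> \<theta> d \<gamma> p q \<beta> \<alpha> \<nu>1 \<nu>2 z k = (A, B, C)"
    by (cases "coefs r lam \<delta> \<theta> d \<gamma> p q \<beta> \<alpha> \<nu>1 \<nu>2 z k") auto
  have C1: "1 - 2 * C 1 > 0" and Xc: "\<theta> * Xstar lam \<gamma> \<nu>1 \<nu>2 z (B 1) (C 1) < 1"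
    using Suc.prems[rule_format, of k] unfolding coefs_admissible_def cf by simp_all
  have X: "\<theta> * gauss_coef \<gamma> ((z - \<nu>2) * lam - \<nu>1 + B 1) (z - \<nu>2) (C 1) < 1"
    using Xc C1 by (simp add: gauss_coef_Xstar)
  have U_nn: "period_factor s \<omega> \<ge> 0" for \<omega> unfolding period_factor_def sdf_explicit_def by simp
  have [measurable]: "period_factor s \<in> borel_measurable (F (s+1))" by (rule period_factor_F)
  have [measurable]: "period_factor s \<in> borel_measurable M" by (rule meas_F_M[OF period_factor_F])
  have [measurable]: "disc_payoff j u \<in> borel_measurable M" "affine_mgf j u \<in> borel_measurable M" for j u
    by (rule disc_payoff_measurable affine_mgf_measurable)+
  have split: "(\<lambda>\<omega>. ennreal (disc_payoff (Suc k) s \<omega>))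
      = (\<lambda>\<omega>. ennreal (period_factor s \<omega>) * ennreal (disc_payoff k (s+1) \<omega>))"
    unfolding disc_payoff_Suc using U_nn by (intro ext) (simp add: ennreal_mult')
  have tower: "AE \<omega> in M. nn_cond_exp M (F s) (\<lambda>\<omega>. ennreal (disc_payoff (Suc k) s \<omega>)) \<omega>
      = nn_cond_exp M (F s) (nn_cond_exp M (F (s+1)) (\<lambda>\<omega>. ennreal (disc_payoff (Suc k) s \<omega>))) \<omega>"
    by (rule S.nn_cond_exp_nested_subalg[OF subalg_F subalg_FF]) simp_all
  have pull_out: "AE \<omega> in M. nn_cond_exp M (F (s+1)) (\<lambda>\<omega>. ennreal (disc_payoff (Suc k) s \<omega>)) \<omega>
      = ennreal (period_factor s \<omega> * affine_mgf k (s+1) \<omega>)"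
    using S1.nn_cond_exp_prod[of "\<lambda>\<omega>. ennreal (period_factor s \<omega>)" "\<lambda>\<omega>. ennreal (disc_payoff k (s+1) \<omega>)"] IH
    unfolding split by (auto elim!: AE_mp simp: ennreal_mult'[OF U_nn])
  have inner: "AE \<omega> in M. nn_cond_exp M (F s) (nn_cond_exp M (F (s+1)) (\<lambda>\<omega>. ennreal (disc_payoff (Suc k) s \<omega>))) \<omega>
      = nn_cond_exp M (F s) (\<lambda>\<omega>. ennreal (period_factor s \<omega> * affine_mgf k (s+1) \<omega>)) \<omega>"
    by (rule S.nn_cond_exp_cong[OF pull_out]) simp_all
  have one_period: "AE \<omega> in M. nn_cond_exp M (F s) (\<lambda>\<omega>. ennreal (period_factor s \<omega> * affine_mgf k (s+1) \<omega>)) \<omega>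
      = ennreal (affine_mgf (Suc k) s \<omega>)"
    using one_period_cond_exp[OF known_part_F[of A B C s] _ X] C1
    unfolding period_factor_affine_mgf[OF cf, symmetric] coefs_step[OF cf]
      gauss_coef_Xstar[of "C 1", OF less_imp_neq[OF C1, symmetric]] by simp
  show ?case using tower inner one_period by (auto elim!: AE_mp)
qed

lemma risk_neutral_mgf:
  assumes admissible: "\<And>k. k < nat (T - t) \<Longrightarrow> coefs_admissible k" and tT: "t < T"
  shows "AE \<omega> in M.
     nn_cond_exp M (F t)
       (\<lambda>\<omega>'. ennreal ((\<Prod>s\<in>{t..<T}. sdf M r lam \<nu>1 \<nu>2 eps RV s \<omega>') *
                      exp (z * (\<Sum>s\<in>{t+1..T}. logret r lam eps RV s \<omega>')))) \<omega>
     = ennreal (affine_mgf (nat (T - t)) t \<omega>)"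
proof -
  interpret S: sigma_finite_subalgebra M "F t" by (rule sfs_F)
  define k where "k = nat (T - t)"
  have Tk: "T = t + int k" unfolding k_def using tT by simp
  have "AE \<omega> in M. \<forall>u\<in>{t..<T}. sdf M r lam \<nu>1 \<nu>2 eps RV u \<omega> = sdf_explicit u \<omega>"
    by (rule AE_finite_allI) (simp_all add: sdf_explicit_ae)
  then have payoff: "AE \<omega> in M. ennreal ((\<Prod>s\<in>{t..<T}. sdf M r lam \<nu>1 \<nu>2 eps RV s \<omega>) *
      exp (z * (\<Sum>s\<in>{t+1..T}. logret r lam eps RV s \<omega>))) = ennreal (disc_payoff k t \<omega>)"
    by (rule AE_mp) (intro AE_I2 impI, simp add: disc_payoff_def Tk)
  have "AE \<omega> in M. nn_cond_exp M (F t)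
       (\<lambda>\<omega>'. ennreal ((\<Prod>s\<in>{t..<T}. sdf M r lam \<nu>1 \<nu>2 eps RV s \<omega>') *
                      exp (z * (\<Sum>s\<in>{t+1..T}. logret r lam eps RV s \<omega>')))) \<omega>
       = nn_cond_exp M (F t) (\<lambda>\<omega>. ennreal (disc_payoff k t \<omega>)) \<omega>"
    using disc_payoff_measurable by (intro S.nn_cond_exp_cong[OF payoff]) (unfold sdf_def logret_def, measurable)
  moreover have "AE \<omega> in M. nn_cond_exp M (F t) (\<lambda>\<omega>. ennreal (disc_payoff k t \<omega>)) \<omega> = ennreal (affine_mgf k t \<omega>)"
    by (rule cond_exp_disc_payoff) (use admissible in \<open>simp add: k_def\<close>)
  ultimately show ?thesis unfolding k_def by (auto elim!: AE_mp)
qed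

end

theorem corollary1:
  fixes M :: "'a measure"
    and eps RV :: "int \<Rightarrow> 'a \<Rightarrow> real"
    and r lam \<delta> \<theta> d \<gamma> \<nu>1 \<nu>2 z :: real
    and p q :: nat
    and \<beta> \<alpha> :: "nat \<Rightarrow> real"
    and t T :: int
  assumes prob: "prob_space M"
    and eps_meas: "\<And>u. eps u \<in> borel_measurable M"
    and RV_meas: "\<And>u. RV u \<in> borel_measurable M"
    and RV_pos: "\<And>u \<omega>. \<omega> \<in> space M \<Longrightarrow> RV u \<omega> > 0"
    and params: "\<delta> > 0" "\<theta> > 0" "d \<ge> 0" "p \<ge> 1" "q \<ge> 1"
    and beta_nn: "\<And>i. 1 \<le> i \<Longrightarrow> i \<le> p \<Longrightarrow> \<beta> i \<ge> 0"
    and alpha_nn: "\<And>j. 1 \<le> j \<Longrightarrow> j \<le> q \<Longrightarrow> \<alpha> j \<ge> 0"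
    \<comment> \<open>eps i.i.d. N(0,1)\<close>
    and eps_normal: "\<And>u. distributed M lborel (eps u) std_normal_density"
    and eps_indep: "prob_space.indep_vars M (\<lambda>_. borel) eps UNIV"
    \<comment> \<open>eps_{s+1} independent of (F_s, RV_{s+1})\<close>
    and eps_indep_past: "\<And>s. prob_space.indep_set M (gen_sets M (eps (s + 1)))
                                   (sets (filt_plus M eps RV s))"
    \<comment> \<open>conditionally on F_s, RV_{s+1} ~ noncentral gamma(delta, Theta_s, theta)\<close>
    and RV_cond_law: "\<And>s B. B \<in> sets borel \<Longrightarrow>
        AE \<omega> in M. real_cond_exp M (filt M eps RV s) (\<lambda>\<omega>'. indicator B (RV (s + 1) \<omega>')) \<omega>
                   = measure (ncgamma \<delta> (Theta d p q \<beta> \<alpha> \<gamma> eps RV s \<omega>) \<theta>) B"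
    and tT: "t < T"
    and Ycond: "\<theta> * Ystar lam \<nu>1 \<nu>2 < 1"
    and Xcond: "\<And>k. k < nat (T - t) \<Longrightarrow>
        (let (A, B, C) = coefs r lam \<delta> \<theta> d \<gamma> p q \<beta> \<alpha> \<nu>1 \<nu>2 z k
         in 1 - 2 * C 1 > 0 \<and> \<theta> * Xstar lam \<gamma> \<nu>1 \<nu>2 z (B 1) (C 1) < 1)"
  shows "AE \<omega> in M.
     nn_cond_exp M (filt M eps RV t)
       (\<lambda>\<omega>'. ennreal ((\<Prod>s\<in>{t..<T}. sdf M r lam \<nu>1 \<nu>2 eps RV s \<omega>') *
                      exp (z * (\<Sum>s\<in>{t+1..T}. logret r lam eps RV s \<omega>')))) \<omega>
     = ennreal (let (A, B, C) = coefs r lam \<delta> \<theta> d \<gamma> p q \<beta> \<alpha> \<nu>1 \<nu>2 z (nat (T - t))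
                in exp (A + (\<Sum>i=1..p. B i * RV (t + 1 - int i) \<omega>)
                          + (\<Sum>j=1..q. C j * lev \<gamma> eps RV (t + 1 - int j) \<omega>)))"
proof -
  interpret lharg_pricing M eps RV \<delta> \<theta> d \<gamma> p q \<beta> \<alpha> r lam \<nu>1 \<nu>2 z
    by (intro lharg_pricing.intro lharg_model.intro lharg_pricing_axioms.intro) (fact assms)+
  have "coefs_admissible k" if "k < nat (T - t)" for k
    using Xcond[OF that] unfolding coefs_admissible_def Let_def by simp
  from risk_neutral_mgf[OF this tT] show ?thesis
    by (simp only: affine_mgf_def Let_def)
qed

end
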